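(* Write $\chi_n^*(M_{1,2}(F))=\sum m_{\langle\lambda\rangle}\chi_{\langle\lambda\rangle}$, the sum over multipartitions $\langle\lambda\rangle=(\lambda(1),\lambda(2),\lambda(3),\lambda(4))\vdash n$ with $h(\lambda(1))\le2$, $h(\lambda(2))\le3$, $h(\lambda(3))\le2$, $h(\lambda(4))\le2$. Let $\langle\lambda\rangle=(\lambda(1),\lambda(2),\emptyset,\lambda(4))$ with $\lambda(2)=(\gamma_1+\gamma_2+\gamma_3,\gamma_2+\gamma_3,\gamma_3)\neq\emptyset$ and $\lambda(4)=(\rho_1+\rho_2,\rho_2)\neq\emptyset$ (all $\gamma_i,\rho_i\ge0$ integers). If either $\rho_1\le2$, or $\rho_1\ge3$ and $\gamma_1+\gamma_2\ge\lceil\rho_1/2\rceil-1$, then $m_{\langle\lambda\rangle}\neq0$.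
   Context: $F$ is a field of characteristic zero. $M_{1,2}(F)$ is $M_3(F)$ with $\mathbb{Z}_2$-grading with even part spanned by $e_{11},e_{22},e_{23},e_{32},e_{33}$, odd part by $e_{12},e_{13},e_{21},e_{31}$, and orthosymplectic superinvolution $*$ sending the matrix with rows $(a,b,c),(d,e,f),(g,h,i)$ to the matrix with rows $(a,-g,d),(c,i,-f),(-b,-h,e)$. Its even symmetric, even skew, odd symmetric, odd skew parts are $\mathrm{span}\{e_{11},e_{22}+e_{33}\}$, $\mathrm{span}\{e_{22}-e_{33},e_{23},e_{32}\}$, $\mathrm{span}\{e_{12}-e_{31},e_{13}+e_{21}\}$, $\mathrm{span}\{e_{12}+e_{31},e_{13}-e_{21}\}$. In the free $*$-superalgebra on variables $y_i^+,y_i^-,z_i^+,z_i^-$ (even symmetric, even skew, odd symmetric, odd skew), a $*$-identity is a polynomial vanishing under all substitutions of the variables by elements of the corresponding parts; $Id_2^*$ denotes the set of them. $P_n^*$ is the span of the monomials $w_{\sigma(1)}\cdots w_{\sigma(n)}$, $\sigma\in S_n$, $w_i\in\{y_i^+,y_i^-,z_i^+,z_i^-\}$. The group $\mathbb{H}_n=(\mathbb{Z}_2\times\mathbb{Z}_2)\wr S_n$, with $\mathbb{Z}_2\times\mathbb{Z}_2=\{1,*,\zeta,*\zeta\}$, acts on $P_n^*$: $h=(a_1,\dots,a_n;\sigma)$ sends $y_i^+\mapsto y_{\sigma(i)}^+$, $y_i^-\mapsto \pm y_{\sigma(i)}^-$ (sign $+$ iff $a_{\sigma(i)}\in\{1,\zeta\}$),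 $z_i^+\mapsto\pm z_{\sigma(i)}^+$ ($+$ iff $a_{\sigma(i)}\in\{1,*\}$), $z_i^-\mapsto\pm z_{\sigma(i)}^-$ ($+$ iff $a_{\sigma(i)}\in\{1,*\zeta\}$). The character of $P_n^*/(P_n^*\cap Id_2^*(M_{1,2}(F)))$ is the $n$-th $*$-cocharacter $\chi_n^*(M_{1,2}(F))$. Irreducible $\mathbb{H}_n$-characters $\chi_{\langle\lambda\rangle}$ correspond to multipartitions $\langle\lambda\rangle=(\lambda(1),\dots,\lambda(4))$, $\lambda(i)\vdash n_i$, $\sum n_i=n$, with $\lambda(1),\dots,\lambda(4)$ corresponding to the variable types $y^+,y^-,z^+,z^-$; equivalently $m_{\langle\lambda\rangle}$ is the multiplicity of $\chi_{\lambda(1)}\otimes\cdots\otimes\chi_{\lambda(4)}$ in the $S_{n_1}\times\cdots\times S_{n_4}$-character of the multilinear polynomials with $n_1,\dots,n_4$ variables of the four types modulo identities. $h(\mu)$ is the height of a partition $\mu$; $\emptyset$ is the empty partition; $\lceil c\rceil$ is the least integer $\ge c$. *)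

theory Defs
  imports Complex_Main "HOL-Library.Function_Algebras" "HOL-Combinatorics.Permutations"
begin

text \<open>3x3 matrices are functions nat => nat => F, indices 0,1,2 (0-based: entry (i,j)
  is e_{i+1,j+1} of the paper), and zero outside.\<close>

type_synonym 'a mat3 = "nat \<Rightarrow> nat \<Rightarrow> 'a"

definition M3 :: "('a::zero) mat3 set" where
  "M3 = {A. \<forall>i j. (3 \<le> i \<or> 3 \<le> j) \<longrightarrow> A i j = 0}"

definition mmul :: "('a::comm_semiring_1) mat3 \<Rightarrow> 'a mat3 \<Rightarrow> 'a mat3" where
  "mmul A B = (\<lambda>i j. \<Sum>k<3. A i k * B k j)"

definition mone :: "('a::comm_semiring_1) mat3" where
  "mone = (\<lambda>i j. if i < 3 \<and> i = j then 1 else 0)"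

definition mzero :: "('a::zero) mat3" where
  "mzero = (\<lambda>i j. 0)"

definition mprod :: "('a::comm_semiring_1) mat3 list \<Rightarrow> 'a mat3" where
  "mprod As = foldr mmul As mone"

definition is_even :: "('a::zero) mat3 \<Rightarrow> bool" where
  "is_even A \<longleftrightarrow> A \<in> M3 \<and> A 0 1 = 0 \<and> A 0 2 = 0 \<and> A 1 0 = 0 \<and> A 2 0 = 0"

definition is_odd :: "('a::zero) mat3 \<Rightarrow> bool" where
  "is_odd A \<longleftrightarrow> A \<in> M3 \<and> A 0 0 = 0 \<and> A 1 1 = 0 \<and> A 1 2 = 0 \<and> A 2 1 = 0 \<and> A 2 2 = 0"

definition sinv :: "('a::ab_group_add) mat3 \<Rightarrow> 'a mat3" where
  "sinv A = (\<lambda>i j.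
     if i = 0 \<and> j = 0 then A 0 0 else
     if i = 0 \<and> j = 1 then - A 2 0 else
     if i = 0 \<and> j = 2 then A 1 0 else
     if i = 1 \<and> j = 0 then A 0 2 else
     if i = 1 \<and> j = 1 then A 2 2 else
     if i = 1 \<and> j = 2 then - A 1 2 else
     if i = 2 \<and> j = 0 then - A 0 1 else
     if i = 2 \<and> j = 1 then - A 2 1 else
     if i = 2 \<and> j = 2 then A 1 1 else 0)"

text \<open>Variable types: 0 = y^+ (even symmetric), 1 = y^- (even skew),
  2 = z^+ (odd symmetric), 3 = z^- (odd skew).\<close>
definition part :: "nat \<Rightarrow> ('a::ab_group_add) mat3 set" where
  "part k = (if k = 0 then {A. is_even A \<and> sinv A = A}
        else if k = 1 then {A. is_even A \<and> sinv A = - A}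
        else if k = 2 then {A. is_odd A \<and> sinv A = A}
        else {A. is_odd A \<and> sinv A = - A})"

definition is_partition :: "nat list \<Rightarrow> bool" where
  "is_partition la \<longleftrightarrow> sorted_wrt (\<ge>) la \<and> 0 \<notin> set la"

definition mkpart :: "nat list \<Rightarrow> nat list" where
  "mkpart xs = filter (\<lambda>x. 0 < x) xs"

text \<open>A multipartition is a list of four partitions (types y^+, y^-, z^+, z^-).
  Variables are numbered 0..<n; block k consists of the n_k variables of type k,
  with n_k = |lambda(k)|, placed consecutively.\<close>

definition sizes :: "nat list list \<Rightarrow> nat list" where
  "sizes mp = map sum_list mp"

definition total :: "nat list list \<Rightarrow> nat" where
  "total mp = sum_list (sizes mp)"

definition offs :: "nat list list \<Rightarrow> nat \<Rightarrow> nat" where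
  "offs mp k = sum_list (take k (sizes mp))"

definition blockof :: "nat list list \<Rightarrow> nat \<Rightarrow> nat" where
  "blockof mp i = (LEAST k. i < offs mp (Suc k))"

text \<open>Row / column of the cell number t (0-based, row by row) of the Young diagram of la.\<close>
definition rowof :: "nat list \<Rightarrow> nat \<Rightarrow> nat" where
  "rowof la t = (LEAST r. t < sum_list (take (Suc r) la))"

definition colof :: "nat list \<Rightarrow> nat \<Rightarrow> nat" where
  "colof la t = t - sum_list (take (rowof la t) la)"

text \<open>Canonical multitableau: the variables of block k fill the diagram of lambda(k) row by row.\<close>
definition rowkey :: "nat list list \<Rightarrow> nat \<Rightarrow> nat \<times> nat" where
  "rowkey mp i = (let k = blockof mp i in (k, rowof (mp ! k) (i - offs mp k)))"

definition colkey :: "nat list list \<Rightarrow> nat \<Rightarrow> nat \<times> nat" where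
  "colkey mp i = (let k = blockof mp i in (k, colof (mp ! k) (i - offs mp k)))"

definition rowstab :: "nat list list \<Rightarrow> (nat \<Rightarrow> nat) set" where
  "rowstab mp = {p. p permutes {0..<total mp} \<and> (\<forall>i < total mp. rowkey mp (p i) = rowkey mp i)}"

definition colstab :: "nat list list \<Rightarrow> (nat \<Rightarrow> nat) set" where
  "colstab mp = {p. p permutes {0..<total mp} \<and> (\<forall>i < total mp. colkey mp (p i) = colkey mp i)}"

text \<open>Multilinear monomials in the variables 0..<n: words using each variable exactly once.
  A multilinear polynomial is a coefficient function on words supported on monomials.
  Variable i has type blockof mp i.\<close>

definition mlwords :: "nat \<Rightarrow> nat list set" where
  "mlwords n = {w. distinct w \<and> set w = {0..<n}}"

definition Pn :: "nat \<Rightarrow> (nat list \<Rightarrow> 'a::zero) set" where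
  "Pn n = {f. \<forall>w. f w \<noteq> 0 \<longrightarrow> w \<in> mlwords n}"

definition evalp :: "(nat list \<Rightarrow> 'a::comm_ring_1) \<Rightarrow> (nat \<Rightarrow> 'a mat3) \<Rightarrow> nat \<Rightarrow> 'a mat3" where
  "evalp f s n = (\<lambda>i j. \<Sum>w\<in>mlwords n. f w * mprod (map s w) i j)"

definition admissible :: "nat list list \<Rightarrow> (nat \<Rightarrow> ('a::comm_ring_1) mat3) \<Rightarrow> bool" where
  "admissible mp s \<longleftrightarrow> (\<forall>i < total mp. s i \<in> part (blockof mp i))"

definition IdP :: "nat list list \<Rightarrow> (nat list \<Rightarrow> 'a::comm_ring_1) set" where
  "IdP mp = {f \<in> Pn (total mp). \<forall>s. admissible mp s \<longrightarrow> evalp f s (total mp) = mzero}"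

text \<open>Left action of a permutation g of the variables: g . (x_{w1}...x_{wn}) = x_{g w1}...x_{g wn}.\<close>
definition pact :: "(nat \<Rightarrow> nat) \<Rightarrow> (nat list \<Rightarrow> 'a) \<Rightarrow> (nat list \<Rightarrow> 'a)" where
  "pact g f = (\<lambda>w. f (map (inv g) w))"

text \<open>Young symmetrizer e_T = (sum of row permutations)(signed sum of column permutations)
  of the canonical multitableau T, for the group S_{n_1} x ... x S_{n_4}.\<close>
definition youngsym :: "nat list list \<Rightarrow> (nat list \<Rightarrow> 'a::comm_ring_1) \<Rightarrow> (nat list \<Rightarrow> 'a)" where
  "youngsym mp f = (\<lambda>w. \<Sum>r\<in>rowstab mp. \<Sum>c\<in>colstab mp. of_int (sign c) * pact (r \<circ> c) f w)"

definition fscale :: "'a::field \<Rightarrow> (nat list \<Rightarrow> 'a) \<Rightarrow> (nat list \<Rightarrow> 'a)" where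
  "fscale c f = (\<lambda>w. c * f w)"

definition fdim :: "(nat list \<Rightarrow> 'a::field) set \<Rightarrow> nat" where
  "fdim V = vector_space.dim fscale V"

definition fspan :: "(nat list \<Rightarrow> 'a::field) set \<Rightarrow> (nat list \<Rightarrow> 'a) set" where
  "fspan V = module.span fscale V"

text \<open>Multiplicity m_lambda of chi_{lambda(1)} x ... x chi_{lambda(4)} in the
  S_{n_1} x ... x S_{n_4}-module Q = P_{n_1,..,n_4}/(P_{n_1,..,n_4} \<inter> Id):
  m_lambda = dim Hom(S^lambda, Q) = dim (e_T Q), where e_T Q = (e_T P + I)/I.\<close>
definition mult :: "'a::field_char_0 itself \<Rightarrow> nat list list \<Rightarrow> nat" where
  "mult _ mp = fdim (fspan (youngsym mp ` (Pn (total mp) :: (nat list \<Rightarrow> 'a) set) \<union> IdP mp))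
               - fdim (IdP mp :: (nat list \<Rightarrow> 'a) set)"

end

theory Submission
  imports Defs
begin

(* It suffices to exhibit a multilinear polynomial e_T f that is not a *-identity, where e_T is
   the Young symmetriser of the canonical multitableau T.  Take for f a single monomial w0 and
   replace every variable in row r of the diagram of type k by one fixed matrix row_subst (k, r).
   Being constant along rows, this substitution turns e_T w0 into a nonzero multiple of the column
   antisymmetrisation of w0, which factors over the columns into the values Y1, [Y1, Y2] and
   s3(Y1, Y2, Y3) for type y-, and Z1, [Z1, Z2] for type z-.  The letters of w0 are ordered so
   that the product has a nonzero entry: the columns of height one of type z- are chained as
   Z1 (Z1 S Z1) ... (Z1 S Z1) with S = Y1 or [Y1, Y2] taken from columns of type y- of height at
   most two, Z1 S Z1 being a nonzero multiple of e11; this needs (rho1 - 1) div 2 such columns,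
   which is the hypothesis on gamma1 + gamma2.  The diagram of type y+ (rows 1 and e22 + e33) is
   placed around an odd letter, so that only one column permutation of it survives. *)

section \<open>Products of \<open>3 \<times> 3\<close> matrices\<close>

lemma sum_lessThan_3: "(\<Sum>k<(3::nat). f k) = f 0 + f 1 + f 2"
  by (simp add: numeral_3_eq_3 numeral_2_eq_2 lessThan_Suc add_ac)

lemma less_3_iff: "(i::nat) < 3 \<longleftrightarrow> i = 0 \<or> i = 1 \<or> i = 2"
  by auto

lemma M3I: "(\<And>i j. 3 \<le> i \<or> 3 \<le> j \<Longrightarrow> A i j = 0) \<Longrightarrow> A \<in> M3"
  by (auto simp: M3_def)

lemma M3D: "A \<in> M3 \<Longrightarrow> 3 \<le> i \<or> 3 \<le> j \<Longrightarrow> A i j = 0"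
  by (auto simp: M3_def)

lemma M3_eqI:
  "A \<in> M3 \<Longrightarrow> B \<in> M3 \<Longrightarrow> (\<And>i j. i < 3 \<Longrightarrow> j < 3 \<Longrightarrow> A i j = B i j) \<Longrightarrow> A = B"
  by (intro ext) (metis M3D not_le)

lemma mmul_assoc: "mmul (mmul A B) C = mmul A (mmul B (C :: 'a::comm_semiring_1 mat3))"
  by (simp add: mmul_def sum_lessThan_3 fun_eq_iff algebra_simps)

lemma mmul_M3: "A \<in> M3 \<Longrightarrow> B \<in> M3 \<Longrightarrow> mmul A B \<in> (M3 :: 'a::comm_semiring_1 mat3 set)"
  by (rule M3I) (auto simp: mmul_def M3D)

lemma mone_M3: "mone \<in> M3"
  by (rule M3I) (auto simp: mone_def)

lemma mzero_M3: "mzero \<in> M3"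
  by (rule M3I) (simp add: mzero_def)

lemma mmul_mone_right: "A \<in> M3 \<Longrightarrow> mmul A mone = (A :: 'a::comm_semiring_1 mat3)"
  by (rule M3_eqI[OF mmul_M3[OF _ mone_M3]]) (auto simp: mmul_def sum_lessThan_3 mone_def less_3_iff)

lemma mmul_mone_left: "A \<in> M3 \<Longrightarrow> mmul mone A = (A :: 'a::comm_semiring_1 mat3)"
  by (rule M3_eqI[OF mmul_M3[OF mone_M3]]) (auto simp: mmul_def sum_lessThan_3 mone_def less_3_iff)

lemma mprod_Nil [simp]: "mprod [] = mone"
  by (simp add: mprod_def)

lemma mprod_Cons [simp]: "mprod (A # As) = mmul A (mprod As)"
  by (simp add: mprod_def)

lemma mprod_M3: "set As \<subseteq> M3 \<Longrightarrow> mprod As \<in> (M3 :: 'a::comm_semiring_1 mat3 set)"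
  by (induction As) (auto simp: mone_M3 mmul_M3)

lemma mprod_append:
  "set As \<subseteq> M3 \<Longrightarrow> set Bs \<subseteq> M3 \<Longrightarrow>
   mprod (As @ Bs) = mmul (mprod As) (mprod (Bs :: 'a::comm_semiring_1 mat3 list))"
  by (induction As) (auto simp: mmul_mone_left mprod_M3 mmul_assoc)

section \<open>Antisymmetrisation over key-preserving permutations\<close>

definition key_perms :: "('v \<Rightarrow> 'k) \<Rightarrow> 'v set \<Rightarrow> ('v \<Rightarrow> 'v) set" where
  "key_perms key S = {p. p permutes S \<and> (\<forall>i\<in>S. key (p i) = key i)}"

lemma key_perms_permutes: "p \<in> key_perms key S \<Longrightarrow> p permutes S"
  by (simp add: key_perms_def)

lemma finite_key_perms: "finite S \<Longrightarrow> finite (key_perms key S)"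
  unfolding key_perms_def by (rule finite_subset[OF _ finite_permutations]) auto

lemma key_perms_const: "(\<And>x. x \<in> S \<Longrightarrow> key x = c) \<Longrightarrow> key_perms key S = {p. p permutes S}"
  by (auto simp: key_perms_def permutes_in_image)

lemma sign_compose_permutes:
  "finite A \<Longrightarrow> finite B \<Longrightarrow> p permutes A \<Longrightarrow> q permutes B \<Longrightarrow> sign (p \<circ> q) = sign p * sign q"
  by (meson permutation_permutes sign_compose)

lemma comp_disjoint_permutes_apply:
  assumes "p permutes A" "q permutes B" "A \<inter> B = {}"
  shows "x \<in> A \<Longrightarrow> (p \<circ> q) x = p x" and "x \<in> B \<Longrightarrow> (p \<circ> q) x = q x"
proof -
  show "x \<in> A \<Longrightarrow> (p \<circ> q) x = p x"
    using permutes_not_in[OF assms(2), of x] assms(3) by (metis comp_apply disjoint_iff)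
  assume "x \<in> B"
  then have "q x \<notin> A" using assms(2,3) permutes_in_image[of q B x] by auto
  then show "(p \<circ> q) x = q x" using assms(1) by (simp add: permutes_not_in)
qed

lemma restrict_id_comp_disjoint_permutes:
  assumes "p permutes A" "q permutes B" "A \<inter> B = {}"
  shows "restrict_id (p \<circ> q) A = p" and "restrict_id (p \<circ> q) B = q"
  using comp_disjoint_permutes_apply[OF assms] assms(1,2)
  by (auto simp: fun_eq_iff restrict_id_def permutes_not_in)

lemma comp_key_perms:
  assumes p: "p \<in> key_perms key A" and q: "q \<in> key_perms key B" and "A \<inter> B = {}"
  shows "p \<circ> q \<in> key_perms key (A \<union> B)"
proof -
  have pA: "p permutes A" and qB: "q permutes B"
    using p q by (simp_all add: key_perms_permutes)
  then have "p \<circ> q permutes A \<union> B"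
    by (meson permutes_compose permutes_subset sup_ge1 sup_ge2)
  then show ?thesis
    using p q comp_disjoint_permutes_apply[OF pA qB \<open>A \<inter> B = {}\<close>]
    by (auto simp: key_perms_def)
qed

lemma key_perms_maps_into:
  assumes c: "c \<in> key_perms key (A \<union> B)" and a: "a \<in> A"
    and keys: "\<And>a b. a \<in> A \<Longrightarrow> b \<in> B \<Longrightarrow> key a \<noteq> key b"
  shows "c a \<in> A"
proof -
  have "c a \<in> A \<union> B"
    using a permutes_in_image[OF key_perms_permutes[OF c], of a] by simp
  moreover have "key (c a) = key a" using c a by (simp add: key_perms_def)
  ultimately show ?thesis using keys[OF a] by (metis UnE)
qed

lemma restrict_key_perms:
  assumes c: "c \<in> key_perms key S" and "finite T" "T \<subseteq> S" "c ` T \<subseteq> T"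
  shows "restrict_id c T \<in> key_perms key T"
proof -
  have "inj_on c T"
    using key_perms_permutes[OF c] by (meson inj_on_subset permutes_inj_on subset_UNIV)
  with assms(2,4) have "bij_betw c T T"
    by (simp add: bij_betw_def endo_inj_surj)
  then have "restrict_id c T permutes T"
    by (rule permutes_restrict_id)
  moreover have "\<forall>i\<in>T. key (restrict_id c T i) = key i"
    using c \<open>T \<subseteq> S\<close> by (auto simp: key_perms_def)
  ultimately show ?thesis
    by (simp add: key_perms_def)
qed

lemma key_perms_Un_decompose:
  assumes c: "c \<in> key_perms key (A \<union> B)" and fin: "finite A" "finite B" and disj: "A \<inter> B = {}"
    and keys: "\<And>a b. a \<in> A \<Longrightarrow> b \<in> B \<Longrightarrow> key a \<noteq> key b"
  shows "restrict_id c A \<in> key_perms key A" "restrict_id c B \<in> key_perms key B"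
    and "restrict_id c A \<circ> restrict_id c B = c"
proof -
  have c': "c \<in> key_perms key (B \<union> A)" using c by (simp only: Un_commute)
  have keys': "\<And>b a. b \<in> B \<Longrightarrow> a \<in> A \<Longrightarrow> key b \<noteq> key a"
    using keys by metis
  have cA: "c ` A \<subseteq> A" by (rule image_subsetI) (rule key_perms_maps_into[OF c _ keys])
  have cB: "c ` B \<subseteq> B" by (rule image_subsetI) (rule key_perms_maps_into[OF c' _ keys'])
  show "restrict_id c A \<in> key_perms key A" "restrict_id c B \<in> key_perms key B"
    by (rule restrict_key_perms[OF c fin(1) Un_upper1 cA],
        rule restrict_key_perms[OF c fin(2) Un_upper2 cB])
  have "(restrict_id c A \<circ> restrict_id c B) x = c x" for x
  proof (cases "x \<in> B")
    case True
    then have "c x \<notin> A" using cB disj by blast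
    with True show ?thesis by simp
  next
    case False
    then show ?thesis
      using permutes_not_in[OF key_perms_permutes[OF c], of x] by (cases "x \<in> A") simp_all
  qed
  then show "restrict_id c A \<circ> restrict_id c B = c" ..
qed

lemma sum_key_perms_Un:
  assumes fin: "finite A" "finite B" and disj: "A \<inter> B = {}"
    and keys: "\<And>a b. a \<in> A \<Longrightarrow> b \<in> B \<Longrightarrow> key a \<noteq> key b"
  shows "(\<Sum>c\<in>key_perms key (A \<union> B). h c) = (\<Sum>p\<in>key_perms key A. \<Sum>q\<in>key_perms key B. h (p \<circ> q))"
proof -
  note decompose = key_perms_Un_decompose[OF _ fin disj keys]
  have "(\<Sum>c\<in>key_perms key (A \<union> B). h c) = (\<Sum>(p, q)\<in>key_perms key A \<times> key_perms key B. h (p \<circ> q))"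
  proof (rule sum.reindex_bij_witness[where i = "\<lambda>(p, q). p \<circ> q"
        and j = "\<lambda>c. (restrict_id c A, restrict_id c B)"])
    fix pq assume "pq \<in> key_perms key A \<times> key_perms key B"
    then obtain p q where pq: "pq = (p, q)" and p: "p \<in> key_perms key A" and q: "q \<in> key_perms key B"
      by blast
    show "(case pq of (p, q) \<Rightarrow> p \<circ> q) \<in> key_perms key (A \<union> B)"
      using comp_key_perms[OF p q disj] pq by simp
    show "(\<lambda>c. (restrict_id c A, restrict_id c B)) (case pq of (p, q) \<Rightarrow> p \<circ> q) = pq"
      using restrict_id_comp_disjoint_permutes[OF key_perms_permutes[OF p] key_perms_permutes[OF q] disj]
        pq
      by simp
  qed (simp_all add: decompose)
  then show ?thesis
    by (simp add: sum.cartesian_product)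
qed

lemma signed_sum_key_perms_Un:
  assumes "finite A" "finite B" "A \<inter> B = {}"
    and "\<And>a b. a \<in> A \<Longrightarrow> b \<in> B \<Longrightarrow> key a \<noteq> key b"
  shows "(\<Sum>c\<in>key_perms key (A \<union> B). of_int (sign c) * h c) =
    (\<Sum>p\<in>key_perms key A. \<Sum>q\<in>key_perms key B. of_int (sign p) * of_int (sign q) * (h (p \<circ> q) :: 'a::comm_ring_1))"
proof -
  have "(\<Sum>c\<in>key_perms key (A \<union> B). of_int (sign c) * h c) =
    (\<Sum>p\<in>key_perms key A. \<Sum>q\<in>key_perms key B. of_int (sign (p \<circ> q)) * h (p \<circ> q))"
    by (rule sum_key_perms_Un[OF assms])
  also have "\<dots> = (\<Sum>p\<in>key_perms key A. \<Sum>q\<in>key_perms key B. of_int (sign p) * of_int (sign q) * h (p \<circ> q))"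
    using assms(1,2) by (intro sum.cong refl) (simp add: sign_compose_permutes key_perms_permutes)
  finally show ?thesis .
qed

lemma map_comp_disjoint_permutes:
  assumes "p permutes A" "q permutes B" "A \<inter> B = {}"
  shows "set w \<subseteq> A \<Longrightarrow> map (f \<circ> (p \<circ> q)) w = map (f \<circ> p) w"
    and "set w \<subseteq> B \<Longrightarrow> map (f \<circ> (p \<circ> q)) w = map (f \<circ> q) w"
  using comp_disjoint_permutes_apply[OF assms] by (auto simp: map_eq_conv subset_iff)

text \<open>For \<open>key = colkey mp\<close> this is the column antisymmetriser of the tableau applied to the
  monomial \<open>w\<close> and evaluated at \<open>s\<close>.\<close>
definition alt_prod :: "('v \<Rightarrow> 'k) \<Rightarrow> ('v \<Rightarrow> 'a::comm_ring_1 mat3) \<Rightarrow> 'v list \<Rightarrow> 'a mat3" where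
  "alt_prod key s w = (\<lambda>i j. \<Sum>p\<in>key_perms key (set w). of_int (sign p) * mprod (map (s \<circ> p) w) i j)"

definition mcomm :: "'a::comm_ring_1 mat3 \<Rightarrow> 'a mat3 \<Rightarrow> 'a mat3" where
  "mcomm A B = mmul A B - mmul B A"

definition mstd3 :: "'a::comm_ring_1 mat3 \<Rightarrow> 'a mat3 \<Rightarrow> 'a mat3 \<Rightarrow> 'a mat3" where
  "mstd3 A B C = mmul A (mmul B C) - mmul A (mmul C B) - mmul B (mmul A C)
     + mmul B (mmul C A) + mmul C (mmul A B) - mmul C (mmul B A)"

lemma alt_prod_append:
  assumes dist: "distinct (w1 @ w2)"
    and keys: "\<And>a b. a \<in> set w1 \<Longrightarrow> b \<in> set w2 \<Longrightarrow> key a \<noteq> key b"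
    and sM: "\<And>x. s x \<in> M3"
  shows "alt_prod key s (w1 @ w2) = mmul (alt_prod key s w1) (alt_prod key s w2)"
proof (intro ext)
  fix i j
  let ?K1 = "key_perms key (set w1)" and ?K2 = "key_perms key (set w2)"
  let ?a = "\<lambda>p k. of_int (sign p) * mprod (map (s \<circ> p) w1) i k"
  let ?b = "\<lambda>q k. of_int (sign q) * mprod (map (s \<circ> q) w2) k j"
  have disj: "set w1 \<inter> set w2 = {}" using dist by auto
  have "alt_prod key s (w1 @ w2) i j = (\<Sum>p\<in>?K1. \<Sum>q\<in>?K2.
      of_int (sign p) * of_int (sign q) * mprod (map (s \<circ> (p \<circ> q)) (w1 @ w2)) i j)"
    unfolding alt_prod_def set_append by (rule signed_sum_key_perms_Un) (use disj keys in auto)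
  also have "\<dots> = (\<Sum>p\<in>?K1. \<Sum>q\<in>?K2. \<Sum>k<3. ?a p k * ?b q k)"
  proof (intro sum.cong refl)
    fix p q assume p: "p \<in> ?K1" and q: "q \<in> ?K2"
    note pq = key_perms_permutes[OF p] key_perms_permutes[OF q]
    have "map (s \<circ> (p \<circ> q)) w1 = map (s \<circ> p) w1" "map (s \<circ> (p \<circ> q)) w2 = map (s \<circ> q) w2"
      by (rule map_comp_disjoint_permutes[OF pq disj order_refl])+
    then show "of_int (sign p) * of_int (sign q) * mprod (map (s \<circ> (p \<circ> q)) (w1 @ w2)) i j =
        (\<Sum>k<3. ?a p k * ?b q k)"
      using sM by (simp only: map_append)
        (simp add: mprod_append image_subset_iff mmul_def sum_distrib_left mult_ac)
  qed
  also have "\<dots> = (\<Sum>k<3. (\<Sum>p\<in>?K1. ?a p k) * (\<Sum>q\<in>?K2. ?b q k))"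
    by (simp only: sum_product sum.swap[of _ "{..<3}"])
  also have "\<dots> = mmul (alt_prod key s w1) (alt_prod key s w2) i j"
    by (simp add: mmul_def alt_prod_def)
  finally show "alt_prod key s (w1 @ w2) i j = mmul (alt_prod key s w1) (alt_prod key s w2) i j" .
qed

lemma alt_prod_Nil: "alt_prod key s [] = mone"
  by (simp add: alt_prod_def key_perms_def)

lemma alt_prod_concat:
  assumes "distinct (concat ws)"
    and "\<And>w x. w \<in> set ws \<Longrightarrow> x \<in> set w \<Longrightarrow> key x = wkey w"
    and "distinct (map wkey ws)"
    and "\<And>x. s x \<in> M3"
  shows "alt_prod key s (concat ws) = mprod (map (alt_prod key s) ws)"
  using assms(1-3)
proof (induction ws)
  case Nil
  show ?case by (simp add: alt_prod_Nil)
next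
  case (Cons w ws)
  have "alt_prod key s (w @ concat ws) = mmul (alt_prod key s w) (alt_prod key s (concat ws))"
  proof (rule alt_prod_append[OF _ _ assms(4)])
    show "distinct (w @ concat ws)" using Cons.prems(1) by simp
    fix a b assume "a \<in> set w" "b \<in> set (concat ws)"
    then show "key a \<noteq> key b" using Cons.prems(2,3) by fastforce
  qed
  then show ?case using Cons by simp
qed

lemma alt_prod_single: "s a \<in> M3 \<Longrightarrow> alt_prod key s [a] = s a"
proof -
  have "key_perms key {a} = {id}" by (auto simp: key_perms_def)
  then show "s a \<in> M3 \<Longrightarrow> ?thesis" by (simp add: alt_prod_def mmul_mone_right)
qed

lemma alt_prod_pair:
  assumes "a \<noteq> b" "key a = key b" and "\<And>x. s x \<in> M3"
  shows "alt_prod key s [a, b] = mcomm (s a) (s b)"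
proof (intro ext)
  fix i j
  have K: "key_perms key {a, b} = {p. p permutes {a, b}}"
    by (rule key_perms_const) (use assms in auto)
  show "alt_prod key s [a, b] i j = mcomm (s a) (s b) i j"
    unfolding alt_prod_def mcomm_def list.set K
    by (subst sum_over_permutations_insert)
       (use assms in \<open>auto simp: sign_compose permutation_swap_id mmul_mone_right sign_swap_id\<close>)
qed

lemma alt_prod_triple:
  assumes "distinct [a, b, c]" "key a = key b" "key a = key c" and sM: "\<And>x. s x \<in> M3"
  shows "alt_prod key s [a, b, c] = mstd3 (s a) (s b) (s c)"
proof (intro ext)
  fix i j
  have K: "key_perms key {a, b, c} = {p. p permutes {a, b, c}}"
    by (rule key_perms_const) (use assms in auto)
  have "\<And>x y. mmul (s x) (s y) \<in> M3" by (simp add: mmul_M3 sM)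
  moreover have "a \<noteq> b" "a \<noteq> c" "b \<noteq> c" "b \<noteq> a" "c \<noteq> a" "c \<noteq> b"
    using assms(1) by auto
  ultimately show "alt_prod key s [a, b, c] i j = mstd3 (s a) (s b) (s c) i j"
    unfolding alt_prod_def mstd3_def list.set K
    by (subst sum_over_permutations_insert, simp, simp)+
      (simp add: sign_compose permutation_swap_id mmul_mone_right sM permutation_compose sign_swap_id)
qed

lemma alt_prod_interleave:
  fixes s :: "'v \<Rightarrow> 'a::comm_ring_1 mat3"
  assumes sM: "\<And>x. s x \<in> M3" and dist: "distinct (X1 @ A @ X2 @ B)"
    and keys: "\<And>a b. a \<in> set X1 \<union> set X2 \<Longrightarrow> b \<in> set A \<union> set B \<Longrightarrow> key a \<noteq> key b"
  shows "alt_prod key s (X1 @ A @ X2 @ B) i j =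
    (\<Sum>c1\<in>key_perms key (set X1 \<union> set X2). \<Sum>c2\<in>key_perms key (set A \<union> set B).
      of_int (sign c1) * of_int (sign c2) * mmul (mprod (map (s \<circ> c1) X1))
        (mmul (mprod (map (s \<circ> c2) A)) (mmul (mprod (map (s \<circ> c1) X2)) (mprod (map (s \<circ> c2) B)))) i j)"
proof -
  let ?L = "set X1 \<union> set X2" and ?R = "set A \<union> set B"
  have disj: "?L \<inter> ?R = {}" using dist by auto
  have "alt_prod key s (X1 @ A @ X2 @ B) i j = (\<Sum>c1\<in>key_perms key ?L. \<Sum>c2\<in>key_perms key ?R.
      of_int (sign c1) * of_int (sign c2) * mprod (map (s \<circ> (c1 \<circ> c2)) (X1 @ A @ X2 @ B)) i j)"
    unfolding alt_prod_def
    using signed_sum_key_perms_Un[OF _ _ disj keys,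
        where h = "\<lambda>c. mprod (map (s \<circ> c) (X1 @ A @ X2 @ B)) i j"]
    by (simp add: Un_ac)
  also have "\<dots> = (\<Sum>c1\<in>key_perms key ?L. \<Sum>c2\<in>key_perms key ?R.
      of_int (sign c1) * of_int (sign c2) * mmul (mprod (map (s \<circ> c1) X1))
        (mmul (mprod (map (s \<circ> c2) A)) (mmul (mprod (map (s \<circ> c1) X2)) (mprod (map (s \<circ> c2) B)))) i j)"
  proof (intro sum.cong refl)
    fix c1 c2 assume "c1 \<in> key_perms key ?L" "c2 \<in> key_perms key ?R"
    note p = key_perms_permutes[OF this(1)] key_perms_permutes[OF this(2)]
    have "map (s \<circ> (c1 \<circ> c2)) X1 = map (s \<circ> c1) X1" "map (s \<circ> (c1 \<circ> c2)) X2 = map (s \<circ> c1) X2"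
      "map (s \<circ> (c1 \<circ> c2)) A = map (s \<circ> c2) A" "map (s \<circ> (c1 \<circ> c2)) B = map (s \<circ> c2) B"
      by (rule map_comp_disjoint_permutes[OF p disj]; auto)+
    then have m: "map (s \<circ> (c1 \<circ> c2)) (X1 @ A @ X2 @ B) =
        map (s \<circ> c1) X1 @ map (s \<circ> c2) A @ map (s \<circ> c1) X2 @ map (s \<circ> c2) B"
      by (simp only: map_append)
    show "of_int (sign c1) * of_int (sign c2) * mprod (map (s \<circ> (c1 \<circ> c2)) (X1 @ A @ X2 @ B)) i j =
      of_int (sign c1) * of_int (sign c2) * mmul (mprod (map (s \<circ> c1) X1))
        (mmul (mprod (map (s \<circ> c2) A)) (mmul (mprod (map (s \<circ> c1) X2)) (mprod (map (s \<circ> c2) B)))) i j"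
      unfolding m by (simp add: mprod_append sM image_subset_iff)
  qed
  finally show ?thesis .
qed

section \<open>Cells of the canonical multitableau\<close>

lemma sum_list_take_mono: "m \<le> n \<Longrightarrow> sum_list (take m xs) \<le> sum_list (take n (xs :: nat list))"
  by (metis le_add_diff_inverse le_add1 sum_list_append take_add)

lemma sum_list_take_Suc:
  "r < length xs \<Longrightarrow> sum_list (take (Suc r) xs) = sum_list (take r xs) + (xs ! r :: nat)"
  by (simp add: take_Suc_conv_app_nth)

lemma rowof_eq:
  assumes "r < length la" "c < la ! r"
  shows "rowof la (sum_list (take r la) + c) = r"
  unfolding rowof_def
proof (rule Least_equality)
  show "sum_list (take r la) + c < sum_list (take (Suc r) la)"
    using assms by (simp add: sum_list_take_Suc)
next
  fix r' assume "sum_list (take r la) + c < sum_list (take (Suc r') la)"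
  then show "r \<le> r'"
    using sum_list_take_mono[of "Suc r'" r la] by linarith
qed

lemma rowof_bounds:
  assumes t: "t < sum_list la"
  shows "rowof la t < length la" and "sum_list (take (rowof la t) la) \<le> t"
    and "t < sum_list (take (Suc (rowof la t)) la)"
proof -
  have "\<exists>r. t < sum_list (take (Suc r) la)"
    using t by (intro exI[of _ "length la"]) simp
  then show "t < sum_list (take (Suc (rowof la t)) la)"
    unfolding rowof_def by (rule LeastI_ex)
  show lower: "sum_list (take (rowof la t) la) \<le> t"
  proof (cases "rowof la t")
    case (Suc r)
    then have "\<not> t < sum_list (take (Suc r) la)"
      using not_less_Least[of r "\<lambda>r. t < sum_list (take (Suc r) la)"] by (simp add: rowof_def)
    then show ?thesis using Suc by simp
  qed simp
  show "rowof la t < length la"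
    using lower t by (metis not_le take_all)
qed

lemma colof_less: "t < sum_list la \<Longrightarrow> colof la t < la ! rowof la t"
  using rowof_bounds[of t la] by (simp add: colof_def sum_list_take_Suc)

lemma rowof_colof: "t < sum_list la \<Longrightarrow> sum_list (take (rowof la t) la) + colof la t = t"
  using rowof_bounds(2)[of t la] by (simp add: colof_def)

lemma blockof_eq_rowof: "blockof mp i = rowof (sizes mp) i"
  by (simp add: blockof_def rowof_def offs_def)

lemma sizes_simps: "length (sizes mp) = length mp" "k < length mp \<Longrightarrow> sizes mp ! k = sum_list (mp ! k)"
  by (simp_all add: sizes_def)

definition cell :: "nat list list \<Rightarrow> nat \<Rightarrow> nat \<Rightarrow> nat \<Rightarrow> nat" where
  "cell mp k r c = offs mp k + sum_list (take r (mp ! k)) + c"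

definition is_cell :: "nat list list \<Rightarrow> nat \<Rightarrow> nat \<Rightarrow> nat \<Rightarrow> bool" where
  "is_cell mp k r c \<longleftrightarrow> k < length mp \<and> r < length (mp ! k) \<and> c < mp ! k ! r"

lemma is_cell_in_block: "is_cell mp k r c \<Longrightarrow> sum_list (take r (mp ! k)) + c < sum_list (mp ! k)"
  unfolding is_cell_def
  by (metis add_less_cancel_left sum_list_take_Suc sum_list_take_mono nat_le_linear take_all
      order_less_le_trans)

lemma blockof_cell: "is_cell mp k r c \<Longrightarrow> blockof mp (cell mp k r c) = k"
  using is_cell_in_block[of mp k r c] rowof_eq[of k "sizes mp"]
  by (simp add: blockof_eq_rowof cell_def offs_def is_cell_def sizes_simps add.assoc)

lemma rowkey_cell: "is_cell mp k r c \<Longrightarrow> rowkey mp (cell mp k r c) = (k, r)"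
  by (simp add: rowkey_def blockof_cell) (simp add: cell_def is_cell_def rowof_eq add.assoc)

lemma colkey_cell: "is_cell mp k r c \<Longrightarrow> colkey mp (cell mp k r c) = (k, c)"
  by (simp add: colkey_def blockof_cell) (simp add: cell_def is_cell_def colof_def rowof_eq add.assoc)

lemma fst_rowkey: "fst (rowkey mp x) = fst (colkey mp x)"
  by (simp add: rowkey_def colkey_def Let_def)

lemma rowkey_key_perms:
  "c \<in> key_perms (colkey mp) S \<Longrightarrow> x \<in> S \<Longrightarrow> rowkey mp (c x) = (fst (colkey mp x), snd (rowkey mp (c x)))"
  using fst_rowkey[of mp "c x"] by (simp add: key_perms_def prod_eq_iff)

lemma cell_less_total: "is_cell mp k r c \<Longrightarrow> cell mp k r c < total mp"
proof -
  assume v: "is_cell mp k r c"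
  then have "cell mp k r c < sum_list (take (Suc k) (sizes mp))"
    using is_cell_in_block[OF v] by (simp add: cell_def offs_def is_cell_def sizes_simps sum_list_take_Suc)
  also have "\<dots> \<le> total mp"
    by (metis total_def sum_list_take_mono nat_le_linear take_all order_refl)
  finally show ?thesis .
qed

lemma cell_inj:
  "is_cell mp k r c \<Longrightarrow> is_cell mp k' r' c' \<Longrightarrow> cell mp k r c = cell mp k' r' c' \<Longrightarrow> (k, r, c) = (k', r', c')"
  by (metis colkey_cell rowkey_cell prod.inject)

lemma cell_cases:
  assumes "i < total mp"
  obtains k r c where "is_cell mp k r c" "i = cell mp k r c"
proof -
  define k where "k = blockof mp i"
  have i: "i < sum_list (sizes mp)" using assms by (simp add: total_def)
  have k: "k < length mp" "offs mp k \<le> i" "i < offs mp k + sum_list (mp ! k)"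
    using rowof_bounds[OF i] sizes_simps
    by (simp_all add: k_def blockof_eq_rowof offs_def sum_list_take_Suc)
  define t where "t = i - offs mp k"
  have t: "t < sum_list (mp ! k)" using k by (simp add: t_def)
  show ?thesis
  proof
    show "is_cell mp k (rowof (mp ! k) t) (colof (mp ! k) t)"
      using k(1) rowof_bounds(1)[OF t] colof_less[OF t] by (simp add: is_cell_def)
    show "i = cell mp k (rowof (mp ! k) t) (colof (mp ! k) t)"
      using rowof_colof[OF t] k(2) by (simp add: cell_def t_def add.assoc)
  qed
qed

lemma mkpart_eq_takeWhile: "sorted_wrt (\<ge>) xs \<Longrightarrow> mkpart xs = takeWhile (\<lambda>x. 0 < x) xs"
proof (induction xs)
  case (Cons x xs)
  then show ?case
    by (cases "0 < x") (auto simp: mkpart_def filter_empty_conv)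
qed (simp add: mkpart_def)

lemma cell_mkpart_iff:
  assumes "sorted_wrt (\<ge>) xs"
  shows "(r < length (mkpart xs) \<and> c < mkpart xs ! r) \<longleftrightarrow> (r < length xs \<and> c < xs ! r)"
proof -
  let ?t = "takeWhile (\<lambda>x. 0 < x) xs"
  have "r < length ?t" if "r < length xs" "0 < xs ! r"
  proof (rule ccontr)
    assume "\<not> r < length ?t"
    then have "xs ! r \<le> xs ! length ?t" "length ?t < length xs"
      using assms that(1) by (cases "length ?t = r", auto simp: sorted_wrt_iff_nth_less)
    then show False
      using nth_length_takeWhile[of _ xs] that(2) by fastforce
  qed
  then show ?thesis
    using length_takeWhile_le[of "\<lambda>x. 0 < x" xs]
    by (auto simp: mkpart_eq_takeWhile[OF assms] takeWhile_nth)
qed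

lemma alt_prod_column:
  fixes V :: "nat \<times> nat \<Rightarrow> 'a::comm_ring_1 mat3"
  assumes cells: "\<And>r. r < h \<Longrightarrow> is_cell mp k r c" and VM: "\<And>kr. V kr \<in> M3"
  defines "col \<equiv> alt_prod (colkey mp) (V \<circ> rowkey mp) (map (\<lambda>r. cell mp k r c) [0..<h])"
  shows "h = 1 \<Longrightarrow> col = V (k, 0)" and "h = 2 \<Longrightarrow> col = mcomm (V (k, 0)) (V (k, 1))"
    and "h = 3 \<Longrightarrow> col = mstd3 (V (k, 0)) (V (k, 1)) (V (k, 2))"
proof -
  have sM: "\<And>x. (V \<circ> rowkey mp) x \<in> M3" by (simp add: VM)
  have val: "(V \<circ> rowkey mp) (cell mp k r c) = V (k, r)" and key: "colkey mp (cell mp k r c) = (k, c)"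
    if "r < h" for r
    using rowkey_cell[OF cells[OF that]] colkey_cell[OF cells[OF that]] by simp_all
  have neq: "cell mp k r c \<noteq> cell mp k r' c" if "r < h" "r' < h" "r \<noteq> r'" for r r'
    using cell_inj[OF cells[OF that(1)] cells[OF that(2)]] that(3) by blast
  show "h = 1 \<Longrightarrow> col = V (k, 0)"
    using val[of 0] by (simp add: col_def alt_prod_single VM)
  show "h = 2 \<Longrightarrow> col = mcomm (V (k, 0)) (V (k, 1))"
    using val[of 0] val[of 1] key[of 0] key[of 1] neq[of 0 1]
    by (simp add: col_def numeral_2_eq_2 alt_prod_pair[OF _ _ sM])
  show "h = 3 \<Longrightarrow> col = mstd3 (V (k, 0)) (V (k, 1)) (V (k, 2))"
    using val[of 0] val[of 1] val[of 2] key[of 0] key[of 1] key[of 2] neq[of 0 1] neq[of 0 2] neq[of 1 2]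
    by (simp add: col_def numeral_3_eq_3 numeral_2_eq_2 alt_prod_triple[OF _ _ _ sM])
qed

section \<open>Nonzero multiplicity from a single evaluation\<close>

text \<open>The ambient space need not be finite-dimensional (\<open>dim_psubset\<close> does not apply); finiteness
  comes from the common finite spanning set \<open>T\<close>.\<close>
lemma (in vector_space) dim_less_dim_Un:
  assumes fin: "finite T" and sp: "I \<subseteq> span T" "Y \<subseteq> span T"
    and I: "subspace I" and y: "y \<in> Y" "y \<notin> I"
  shows "dim I < dim (Y \<union> I)"
proof -
  obtain B where B: "B \<subseteq> I" "independent B" "I \<subseteq> span B" "card B = dim I"
    by (rule basis_exists)
  have "finite B"
    using independent_span_bound[OF fin B(2)] B(1) sp by blast
  have "span B \<subseteq> I" using B(1) I by (rule span_minimal)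
  then have yB: "y \<notin> span B" using y by blast
  have "insert y B \<subseteq> Y \<union> I" using y B(1) by blast
  moreover have "independent (insert y B)" using yB B(2) by (rule independent_insertI)
  ultimately obtain B' where B': "insert y B \<subseteq> B'" "B' \<subseteq> Y \<union> I" "independent B'" "Y \<union> I \<subseteq> span B'"
    by (rule maximal_independent_subset_extend)
  have "finite B'"
    using independent_span_bound[OF fin B'(3)] B'(2) sp by blast
  have "card (insert y B) \<le> card B'" by (rule card_mono[OF \<open>finite B'\<close> B'(1)])
  moreover have "card (insert y B) = Suc (card B)"
    using \<open>finite B\<close> yB span_base[of y B] by (metis card_insert_disjoint)
  moreover have "card B' = dim (Y \<union> I)" by (rule basis_card_eq_dim[OF B'(2,4,3)])
  ultimately show ?thesis using B(4) by linarith
qed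

lemma vector_space_fscale: "vector_space (fscale :: 'a::field \<Rightarrow> (nat list \<Rightarrow> 'a) \<Rightarrow> _)"
  unfolding vector_space_def fscale_def by (auto simp: fun_eq_iff algebra_simps)

interpretation fvec: vector_space "fscale :: 'a::field \<Rightarrow> (nat list \<Rightarrow> 'a) \<Rightarrow> _"
  by (rule vector_space_fscale)

lemma sum_fun_apply: "(sum f A) x = (\<Sum>a\<in>A. f a x)"
  by (induction A rule: infinite_finite_induct) auto

lemma finite_mlwords: "finite (mlwords n)"
proof -
  have "mlwords n \<subseteq> {w. set w \<subseteq> {0..<n} \<and> length w = n}"
    by (auto simp: mlwords_def distinct_card[symmetric])
  then show ?thesis by (rule finite_subset) (rule finite_lists_length_eq, simp)
qed

lemma map_permutes_mlwords: "g permutes {0..<n} \<Longrightarrow> w \<in> mlwords n \<Longrightarrow> map g w \<in> mlwords n"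
  by (auto simp: mlwords_def distinct_map permutes_image permutes_inj_on)

lemma map_inv_permutes: "g permutes S \<Longrightarrow> map g (map (inv g) w) = w"
  by (simp add: map_idI permutes_inverses(1))

definition word_poly :: "nat list \<Rightarrow> nat list \<Rightarrow> 'a::field" where
  "word_poly w = (\<lambda>v. if v = w then 1 else 0)"

lemma word_poly_Pn: "w \<in> mlwords n \<Longrightarrow> word_poly w \<in> Pn n"
  by (simp add: Pn_def word_poly_def)

lemma Pn_subset_span: "Pn n \<subseteq> fvec.span (word_poly ` mlwords n)"
proof
  fix f :: "nat list \<Rightarrow> 'a" assume f: "f \<in> Pn n"
  have "f = (\<Sum>w\<in>mlwords n. fscale (f w) (word_poly w))"
    using f finite_mlwords[of n]
    by (auto simp: fun_eq_iff sum_fun_apply fscale_def word_poly_def Pn_def if_distrib cong: if_cong)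
  also have "\<dots> \<in> fvec.span (word_poly ` mlwords n)"
    by (intro fvec.span_sum fvec.span_scale fvec.span_base) auto
  finally show "f \<in> fvec.span (word_poly ` mlwords n)" .
qed

lemma rowstab_colstab_permutes:
  "r \<in> rowstab mp \<Longrightarrow> c \<in> colstab mp \<Longrightarrow> r \<circ> c permutes {0..<total mp}"
  unfolding rowstab_def colstab_def by (intro permutes_compose) simp_all

lemma youngsym_Pn:
  assumes f: "f \<in> Pn (total mp)"
  shows "youngsym mp f \<in> Pn (total mp)"
  unfolding Pn_def
proof clarify
  fix w assume "youngsym mp f w \<noteq> 0"
  then obtain r where r: "r \<in> rowstab mp"
    and nz: "(\<Sum>c\<in>colstab mp. of_int (sign c) * pact (r \<circ> c) f w) \<noteq> 0"
    unfolding youngsym_def by (rule sum.not_neutral_contains_not_neutral)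
  from nz obtain c where c: "c \<in> colstab mp" and "of_int (sign c) * pact (r \<circ> c) f w \<noteq> 0"
    by (rule sum.not_neutral_contains_not_neutral)
  then have "f (map (inv (r \<circ> c)) w) \<noteq> 0"
    by (auto simp: pact_def)
  then have "map (inv (r \<circ> c)) w \<in> mlwords (total mp)"
    using f by (simp add: Pn_def)
  with rowstab_colstab_permutes[OF r c] show "w \<in> mlwords (total mp)"
    by (metis map_permutes_mlwords map_inv_permutes)
qed

lemma subspace_IdP: "fvec.subspace (IdP mp :: (nat list \<Rightarrow> 'a::field) set)"
  unfolding fvec.subspace_def
proof (intro conjI ballI allI)
  show "0 \<in> (IdP mp :: (nat list \<Rightarrow> 'a) set)"
    by (auto simp: IdP_def Pn_def evalp_def mzero_def)
next
  fix f g :: "nat list \<Rightarrow> 'a" assume "f \<in> IdP mp" "g \<in> IdP mp"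
  then show "f + g \<in> IdP mp"
    by (auto simp: IdP_def Pn_def evalp_def mzero_def fun_eq_iff distrib_right sum.distrib)
      (metis add.right_neutral)
next
  fix a :: 'a and f :: "nat list \<Rightarrow> 'a" assume "f \<in> IdP mp"
  then show "fscale a f \<in> IdP mp"
    by (auto simp: IdP_def Pn_def evalp_def mzero_def fun_eq_iff fscale_def mult.assoc
        sum_distrib_left[symmetric])
qed

lemma mult_neq_0I:
  fixes F :: "'a::field_char_0 itself"
  assumes "y \<in> youngsym mp ` (Pn (total mp) :: (nat list \<Rightarrow> 'a) set)" and "y \<notin> IdP mp"
  shows "mult F mp \<noteq> 0"
proof -
  have "fvec.dim (IdP mp :: (nat list \<Rightarrow> 'a) set) <
      fvec.dim (youngsym mp ` (Pn (total mp) :: (nat list \<Rightarrow> 'a) set) \<union> IdP mp)"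
  proof (rule fvec.dim_less_dim_Un[OF _ _ _ subspace_IdP assms])
    show "finite (word_poly ` mlwords (total mp) :: (nat list \<Rightarrow> 'a) set)"
      by (simp add: finite_mlwords)
    show "IdP mp \<subseteq> fvec.span (word_poly ` mlwords (total mp))"
      using Pn_subset_span by (fastforce simp: IdP_def)
    show "youngsym mp ` Pn (total mp) \<subseteq> fvec.span (word_poly ` mlwords (total mp))"
      using Pn_subset_span youngsym_Pn by blast
  qed
  then show ?thesis
    by (simp add: mult_def fdim_def fspan_def)
qed

lemma eval_youngsym_word_poly:
  assumes w: "w \<in> mlwords (total mp)"
  shows "evalp (youngsym mp (word_poly w)) s (total mp) i j =
    (\<Sum>r\<in>rowstab mp. \<Sum>c\<in>colstab mp. of_int (sign c) * mprod (map (s \<circ> (r \<circ> c)) w) i (j :: nat))"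
proof -
  let ?n = "total mp"
  have monomial: "(\<Sum>v\<in>mlwords ?n. word_poly w (map (inv g) v) * mprod (map s v) i j) =
      mprod (map (s \<circ> g) w) i j"
    if g: "g permutes {0..<?n}" for g
  proof -
    have "map (inv g) v = w \<longleftrightarrow> v = map g w" for v
      using map_inv_permutes[OF g, of v] permutes_inverses(2)[OF g] by (auto simp: comp_def)
    then have "(\<Sum>v\<in>mlwords ?n. word_poly w (map (inv g) v) * mprod (map s v) i j)
        = (\<Sum>v\<in>mlwords ?n. if v = map g w then mprod (map s v) i j else 0)"
      by (intro sum.cong) (auto simp: word_poly_def)
    then show ?thesis
      using map_permutes_mlwords[OF g w] finite_mlwords by simp
  qed
  have "evalp (youngsym mp (word_poly w)) s ?n i j =
      (\<Sum>v\<in>mlwords ?n. \<Sum>r\<in>rowstab mp. \<Sum>c\<in>colstab mp.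
         of_int (sign c) * (word_poly w (map (inv (r \<circ> c)) v) * mprod (map s v) i j))"
    by (simp add: evalp_def youngsym_def pact_def sum_distrib_right mult.assoc)
  also have "\<dots> = (\<Sum>r\<in>rowstab mp. \<Sum>c\<in>colstab mp. \<Sum>v\<in>mlwords ?n.
         of_int (sign c) * (word_poly w (map (inv (r \<circ> c)) v) * mprod (map s v) i j))"
    by (subst sum.swap) (intro sum.cong refl, rule sum.swap)
  also have "\<dots> = (\<Sum>r\<in>rowstab mp. \<Sum>c\<in>colstab mp. of_int (sign c) * mprod (map (s \<circ> (r \<circ> c)) w) i j)"
    by (intro sum.cong refl)
      (simp add: sum_distrib_left[symmetric] monomial[OF rowstab_colstab_permutes])
  finally show ?thesis .
qed

lemma finite_rowstab: "finite (rowstab mp)"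
  by (rule finite_subset[OF _ finite_permutations[of "{0..<total mp}"]]) (auto simp: rowstab_def)

lemma colstab_eq_key_perms: "colstab mp = key_perms (colkey mp) {0..<total mp}"
  by (auto simp: colstab_def key_perms_def)

text \<open>The substitution \<open>V \<circ> rowkey mp\<close> is constant along the rows of the tableau, so the row
  symmetriser only contributes the factor \<open>card (rowstab mp)\<close>, which is nonzero in
  characteristic 0.\<close>
lemma mult_neq_0_if_alt_prod:
  fixes F :: "'a::field_char_0 itself" and V :: "nat \<times> nat \<Rightarrow> 'a mat3"
  assumes w: "w \<in> mlwords (total mp)" and V: "\<And>k r. V (k, r) \<in> part k"
    and nz: "alt_prod (colkey mp) (V \<circ> rowkey mp) w i j \<noteq> 0"
  shows "mult F mp \<noteq> 0"
proof (rule mult_neq_0I)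
  let ?s = "V \<circ> rowkey mp" and ?y = "youngsym mp (word_poly w) :: nat list \<Rightarrow> 'a"
  show "?y \<in> youngsym mp ` Pn (total mp)"
    using word_poly_Pn[OF w] by blast
  have row_const: "?s \<circ> (r \<circ> c) = ?s \<circ> c" if r: "r \<in> rowstab mp" for r c :: "nat \<Rightarrow> nat"
  proof
    fix x
    show "(?s \<circ> (r \<circ> c)) x = (?s \<circ> c) x"
      using r permutes_not_in[of r "{0..<total mp}" "c x"]
      by (cases "c x < total mp") (auto simp: rowstab_def)
  qed
  have "evalp ?y ?s (total mp) i j =
      of_nat (card (rowstab mp)) * alt_prod (colkey mp) ?s w i j"
    using w by (simp add: eval_youngsym_word_poly row_const alt_prod_def colstab_eq_key_perms mlwords_def)
  moreover have "card (rowstab mp) \<noteq> 0"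
    using finite_rowstab[of mp] card_0_eq[of "rowstab mp"] by (auto simp: rowstab_def intro!: exI[of _ id])
  ultimately have "evalp ?y ?s (total mp) i j \<noteq> 0"
    using nz by simp
  then have "evalp ?y ?s (total mp) \<noteq> mzero"
    by (auto simp: mzero_def)
  moreover have "admissible mp ?s"
    using V by (simp add: admissible_def rowkey_def Let_def)
  ultimately show "?y \<notin> IdP mp"
    by (auto simp: IdP_def)
qed

section \<open>The substituted matrices\<close>

definition mproj :: "'a::comm_ring_1 mat3" where
  "mproj = (\<lambda>i j. if (i = 1 \<and> j = 1) \<or> (i = 2 \<and> j = 2) then 1 else 0)"

text \<open>With the indices of the paper: \<open>mproj = e22 + e33\<close>; \<open>Y1 = e22 - e33 + e23\<close>,
  \<open>Y2 = e22 - e33 + e32\<close> and \<open>Y3 = e23\<close> are even skew; \<open>Z1 = e12 + e31\<close> and \<open>Z2 = e13 - e21\<close>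
  are odd skew.\<close>
definition Y1 :: "'a::comm_ring_1 mat3" where
  "Y1 = (\<lambda>i j. if i = 1 \<and> j = 1 then 1 else if i = 2 \<and> j = 2 then -1 else if i = 1 \<and> j = 2 then 1 else 0)"

definition Y2 :: "'a::comm_ring_1 mat3" where
  "Y2 = (\<lambda>i j. if i = 1 \<and> j = 1 then 1 else if i = 2 \<and> j = 2 then -1 else if i = 2 \<and> j = 1 then 1 else 0)"

definition Y3 :: "'a::comm_ring_1 mat3" where
  "Y3 = (\<lambda>i j. if i = 1 \<and> j = 2 then 1 else 0)"

definition Z1 :: "'a::comm_ring_1 mat3" where
  "Z1 = (\<lambda>i j. if (i = 0 \<and> j = 1) \<or> (i = 2 \<and> j = 0) then 1 else 0)"

definition Z2 :: "'a::comm_ring_1 mat3" where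
  "Z2 = (\<lambda>i j. if i = 0 \<and> j = 2 then 1 else if i = 1 \<and> j = 0 then -1 else 0)"

definition Kmat :: "'a::comm_ring_1 mat3" where
  "Kmat = (\<lambda>i j. if i = 1 \<and> j = 1 then 1 else if i = 2 \<and> j = 2 then -1
     else if (i = 1 \<and> j = 2) \<or> (i = 2 \<and> j = 1) then -2 else 0)"

definition Smat :: "'a::comm_ring_1 mat3" where
  "Smat = (\<lambda>i j. if (i = 1 \<and> j = 1) \<or> (i = 2 \<and> j = 2) then -3 else 0)"

definition Dmat :: "'a::comm_ring_1 mat3" where
  "Dmat = (\<lambda>i j. if i = 0 \<and> j = 0 then -2 else if (i = 1 \<and> j = 1) \<or> (i = 2 \<and> j = 2) then 1 else 0)"

definition scal_e11 :: "'a::comm_ring_1 \<Rightarrow> 'a mat3" where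
  "scal_e11 t = (\<lambda>i j. if i = 0 \<and> j = 0 then t else 0)"

lemmas mat_defs = mproj_def Y1_def Y2_def Y3_def Z1_def Z2_def Kmat_def Smat_def Dmat_def scal_e11_def
  mone_def mzero_def

lemma mats_M3: "mproj \<in> M3" "Y1 \<in> M3" "Y2 \<in> M3" "Y3 \<in> M3" "Z1 \<in> M3" "Z2 \<in> M3"
  "Kmat \<in> M3" "Smat \<in> M3" "Dmat \<in> M3" "scal_e11 t \<in> M3"
  by (auto intro!: M3I simp: mat_defs)

lemma mcomm_M3: "A \<in> M3 \<Longrightarrow> B \<in> M3 \<Longrightarrow> mcomm A B \<in> M3"
  by (rule M3I) (auto simp: mcomm_def mmul_def M3D)

lemma mstd3_M3: "A \<in> M3 \<Longrightarrow> B \<in> M3 \<Longrightarrow> C \<in> M3 \<Longrightarrow> mstd3 A B C \<in> M3"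
  by (rule M3I) (auto simp: mstd3_def mmul_def M3D)

lemma mcomm_Y1_Y2: "mcomm Y1 Y2 = (Kmat :: 'a::comm_ring_1 mat3)"
  by (rule M3_eqI[OF mcomm_M3[OF mats_M3(2,3)] mats_M3(7)])
    (auto simp: mcomm_def mmul_def sum_lessThan_3 mat_defs less_3_iff)

lemma mstd3_Y1_Y2_Y3: "mstd3 Y1 Y2 Y3 = (Smat :: 'a::comm_ring_1 mat3)"
  by (rule M3_eqI[OF mstd3_M3[OF mats_M3(2,3,4)] mats_M3(8)])
    (auto simp: mstd3_def mmul_def sum_lessThan_3 mat_defs less_3_iff)

lemma mcomm_Z1_Z2: "mcomm Z1 Z2 = (Dmat :: 'a::comm_ring_1 mat3)"
  by (rule M3_eqI[OF mcomm_M3[OF mats_M3(5,6)] mats_M3(9)])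
    (auto simp: mcomm_def mmul_def sum_lessThan_3 mat_defs less_3_iff)

lemma mone_even: "is_even (mone :: 'a::comm_ring_1 mat3)"
  by (simp add: is_even_def mone_M3) (simp add: mone_def)

lemma mzero_even_odd: "is_even (mzero :: 'a::comm_ring_1 mat3)" "is_odd (mzero :: 'a mat3)"
  by (simp_all add: is_even_def is_odd_def mzero_M3) (simp_all add: mzero_def)

lemma mats_even: "is_even (Y1 :: 'a::comm_ring_1 mat3)" "is_even (Y2 :: 'a mat3)"
  "is_even (Y3 :: 'a mat3)" "is_even (Kmat :: 'a mat3)" "is_even (Smat :: 'a mat3)"
  by (simp_all add: is_even_def mats_M3) (simp_all add: mat_defs)

lemma mats_odd: "is_odd (Z1 :: 'a::comm_ring_1 mat3)" "is_odd (Z2 :: 'a mat3)"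
  by (simp_all add: is_odd_def mats_M3) (simp_all add: mat_defs)

lemma even_mmul: "is_even A \<Longrightarrow> is_even B \<Longrightarrow> is_even (mmul A (B :: 'a::comm_ring_1 mat3))"
  by (simp add: is_even_def mmul_M3) (simp add: mmul_def sum_lessThan_3)

lemma even_mmul_odd: "is_even A \<Longrightarrow> is_odd B \<Longrightarrow> is_odd (mmul A (B :: 'a::comm_ring_1 mat3))"
  by (auto simp: is_even_def is_odd_def mmul_M3) (simp_all add: mmul_def sum_lessThan_3)

lemma mprod_even: "\<forall>A\<in>set As. is_even A \<Longrightarrow> is_even (mprod (As :: 'a::comm_ring_1 mat3 list))"
  by (induction As) (auto simp: mone_even even_mmul)

lemma mprod_snoc_odd:
  assumes "\<forall>A\<in>set As. is_even A" "is_odd B"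
  shows "is_odd (mprod (As @ [B :: 'a::comm_ring_1 mat3]))"
proof -
  have "set As \<subseteq> M3" "B \<in> M3" using assms by (auto simp: is_even_def is_odd_def)
  then have "mprod (As @ [B]) = mmul (mprod As) B"
    by (simp add: mprod_append mmul_mone_right)
  then show ?thesis using even_mmul_odd[OF mprod_even] assms by simp
qed

definition row_subst :: "nat \<times> nat \<Rightarrow> 'a::comm_ring_1 mat3" where
  "row_subst = (\<lambda>(k, r).
     if k = 0 then (if r = 0 then mone else if r = 1 then mproj else mzero)
     else if k = 1 then (if r = 0 then Y1 else if r = 1 then Y2 else if r = 2 then Y3 else mzero)
     else if k = 3 then (if r = 0 then Z1 else if r = 1 then Z2 else mzero)
     else mzero)"

lemma row_subst_part: "row_subst (k, r) \<in> part k"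
  unfolding row_subst_def part_def is_even_def is_odd_def
  by (auto simp: mats_M3 mone_M3 mzero_M3) (auto simp: sinv_def mat_defs fun_eq_iff)

lemma row_subst_M3: "row_subst kr \<in> M3"
  by (auto simp: row_subst_def mats_M3 mone_M3 mzero_M3 split: prod.splits)

lemma row_subst_even: "is_even (row_subst (1, r))"
  by (simp add: row_subst_def mats_even mzero_even_odd)

lemma row_subst_odd: "is_odd (row_subst (3, r))"
  by (simp add: row_subst_def mats_odd mzero_even_odd)

lemma mproj_neq_mone: "mproj \<noteq> (mone :: 'a::comm_ring_1 mat3)"
proof
  assume "mproj = (mone :: 'a mat3)"
  then have "mproj 0 0 = (mone 0 0 :: 'a)" by simp
  then show False by (simp add: mat_defs)
qed

lemma mmul_mproj_mproj: "mmul mproj mproj = (mproj :: 'a::comm_ring_1 mat3)"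
  by (rule M3_eqI[OF mmul_M3[OF mats_M3(1,1)] mats_M3(1)])
    (auto simp: mmul_def sum_lessThan_3 mat_defs less_3_iff)

lemma mprod_mone_mproj:
  "set As \<subseteq> {mone, mproj} \<Longrightarrow> mprod As = (if mproj \<in> set As then mproj else (mone :: 'a::comm_ring_1 mat3))"
  by (induction As)
    (auto simp: mmul_mone_left mmul_mone_right mone_M3 mats_M3 mmul_mproj_mproj mproj_neq_mone)

lemma mmul_mone_mproj_rows:
  "D \<in> {mone, mproj} \<Longrightarrow> i = 1 \<or> i = 2 \<Longrightarrow> mmul D X i j = (X i j :: 'a::comm_ring_1)"
  by (auto simp: mmul_def sum_lessThan_3 mat_defs)

lemma odd_mmul_mproj_rows:
  "is_odd W \<Longrightarrow> i = 1 \<or> i = 2 \<Longrightarrow> mmul W (mmul mproj X) i j = (0 :: 'a::comm_ring_1)"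
  by (auto simp: is_odd_def mmul_def sum_lessThan_3 mproj_def)

text \<open>A two-row diagram filled with \<open>mone\<close> (first row \<open>X1\<close>) and \<open>mproj\<close> (second row \<open>X2\<close>),
  interleaved with an odd factor: every rearrangement \<open>c\<close> other than \<open>F\<close> puts some \<open>mproj\<close>
  into \<open>X2\<close>, and then rows 1 and 2 of the product vanish because \<open>mproj\<close> follows an odd matrix.\<close>
lemma alt_prod_two_rows:
  fixes s :: "'v \<Rightarrow> 'a::comm_ring_1 mat3"
  assumes sM: "\<And>x. s x \<in> M3"
    and dist: "distinct (X1 @ A @ X2 @ B)"
    and keys: "\<And>a b. a \<in> set X1 \<union> set X2 \<Longrightarrow> b \<in> set A \<union> set B \<Longrightarrow> key a \<noteq> key b"
    and diag: "\<And>x. x \<in> set X1 \<union> set X2 \<Longrightarrow> s x \<in> {mone, mproj}"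
    and F: "F \<in> key_perms key (set X1 \<union> set X2)" "\<And>x. x \<in> set X2 \<Longrightarrow> s (F x) = mone"
    and not_F: "\<And>c. c \<in> key_perms key (set X1 \<union> set X2) \<Longrightarrow> c \<noteq> F \<Longrightarrow> \<exists>x\<in>set X2. s (c x) = mproj"
    and odd: "\<And>c. c \<in> key_perms key (set A \<union> set B) \<Longrightarrow> is_odd (mprod (map (s \<circ> c) A))"
    and i: "i = 1 \<or> i = 2"
  shows "alt_prod key s (X1 @ A @ X2 @ B) i j = of_int (sign F) * alt_prod key s (A @ B) i j"
proof -
  let ?L = "set X1 \<union> set X2" and ?R = "set A \<union> set B"
  let ?t = "\<lambda>c1 c2. of_int (sign c1) * of_int (sign c2) * mmul (mprod (map (s \<circ> c1) X1))
    (mmul (mprod (map (s \<circ> c2) A)) (mmul (mprod (map (s \<circ> c1) X2)) (mprod (map (s \<circ> c2) B)))) i j"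
  have diag1: "mprod (map (s \<circ> c1) X1) \<in> {mone, mproj}" "set (map (s \<circ> c1) X2) \<subseteq> {mone, mproj}"
    if "c1 \<in> key_perms key ?L" for c1
  proof -
    have "set (map (s \<circ> c1) (X1 @ X2)) \<subseteq> {mone, mproj}"
      using diag permutes_in_image[OF key_perms_permutes[OF that]] by auto
    then show "mprod (map (s \<circ> c1) X1) \<in> {mone, mproj}" "set (map (s \<circ> c1) X2) \<subseteq> {mone, mproj}"
      by (simp_all add: mprod_mone_mproj)
  qed
  have zero: "?t c1 c2 = 0"
    if c1: "c1 \<in> key_perms key ?L" "c1 \<noteq> F" and c2: "c2 \<in> key_perms key ?R" for c1 c2
  proof -
    have "mprod (map (s \<circ> c1) X2) = mproj"
      using not_F[OF c1] diag1[OF c1(1)] by (force simp: mprod_mone_mproj)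
    then show ?thesis
      using mmul_mone_mproj_rows[OF diag1(1)[OF c1(1)] i] odd_mmul_mproj_rows[OF odd[OF c2] i] by simp
  qed
  have "alt_prod key s (X1 @ A @ X2 @ B) i j = (\<Sum>c1\<in>key_perms key ?L. \<Sum>c2\<in>key_perms key ?R. ?t c1 c2)"
    by (rule alt_prod_interleave[OF sM dist keys])
  also have "\<dots> = (\<Sum>c2\<in>key_perms key ?R. ?t F c2)"
    using zero F(1)
    by (subst sum.remove[of "key_perms key ?L" F]) (auto simp: finite_key_perms intro!: sum.neutral)
  also have "\<dots> = (\<Sum>c2\<in>key_perms key ?R. of_int (sign F) * (of_int (sign c2) * mprod (map (s \<circ> c2) (A @ B)) i j))"
  proof (intro sum.cong refl)
    fix c2
    have "mprod (map (s \<circ> F) X2) = mone"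
      using F(2) mproj_neq_mone by (simp add: mprod_mone_mproj image_subset_iff) blast
    then show "?t F c2 = of_int (sign F) * (of_int (sign c2) * mprod (map (s \<circ> c2) (A @ B)) i j)"
      using mmul_mone_mproj_rows[OF diag1(1)[OF F(1)] i]
      by (simp add: mprod_append sM image_subset_iff mmul_mone_left mprod_M3)
  qed
  also have "\<dots> = of_int (sign F) * alt_prod key s (A @ B) i j"
    by (simp add: alt_prod_def sum_distrib_left Un_ac)
  finally show ?thesis .
qed

text \<open>An even matrix whose lower right \<open>2 \<times> 2\<close> block is invertible.\<close>
definition block_invertible :: "'a::field mat3 \<Rightarrow> bool" where
  "block_invertible M \<longleftrightarrow> is_even M \<and> (\<exists>N\<in>M3. mmul N (mmul mproj M) = mproj)"

lemma even_mproj_commute: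
  assumes "is_even M" shows "mmul mproj M = mmul M (mproj :: 'a::comm_ring_1 mat3)"
proof -
  have M: "M \<in> M3" using assms by (simp add: is_even_def)
  show ?thesis
    by (rule M3_eqI[OF mmul_M3[OF mats_M3(1) M] mmul_M3[OF M mats_M3(1)]])
      (use assms in \<open>auto simp: is_even_def mmul_def sum_lessThan_3 mproj_def less_3_iff\<close>)
qed

lemma block_invertible_mone: "block_invertible (mone :: 'a::field mat3)"
  unfolding block_invertible_def
  using mmul_mproj_mproj mats_M3(1) mone_even by (auto simp: mmul_mone_right intro!: bexI[of _ mproj])

lemma block_invertible_mmul:
  assumes "block_invertible A" "block_invertible (B :: 'a::field mat3)"
  shows "block_invertible (mmul A B)"
proof -
  obtain NA where NA: "NA \<in> M3" "mmul NA (mmul mproj A) = mproj"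
    using assms(1) by (auto simp: block_invertible_def)
  obtain NB where NB: "NB \<in> M3" "mmul NB (mmul mproj B) = mproj"
    using assms(2) by (auto simp: block_invertible_def)
  have even: "is_even A" "is_even B" using assms by (auto simp: block_invertible_def)
  have "mmul mproj (mmul A B) = mmul (mmul mproj A) (mmul mproj B)"
    by (metis even(1) even_mproj_commute mmul_assoc mmul_mproj_mproj)
  then have "mmul (mmul NB NA) (mmul mproj (mmul A B)) = mproj"
    using NA NB by (metis mmul_assoc)
  then show ?thesis
    unfolding block_invertible_def using even_mmul[OF even] mmul_M3[OF NB(1) NA(1)] by blast
qed

lemma block_invertible_mprod:
  "\<forall>A\<in>set As. block_invertible A \<Longrightarrow> block_invertible (mprod (As :: 'a::field mat3 list))"
  by (induction As) (auto simp: block_invertible_mone block_invertible_mmul)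

lemma block_invertible_consts:
  "block_invertible (Y1 :: 'a::field_char_0 mat3)" "block_invertible (Kmat :: 'a mat3)"
  "block_invertible (Smat :: 'a mat3)"
proof -
  have "mmul Y1 (mmul mproj Y1) = (mproj :: 'a mat3)"
    by (rule M3_eqI[OF mmul_M3 mats_M3(1)])
      (auto simp: mmul_def sum_lessThan_3 mat_defs less_3_iff intro!: M3I)
  then show "block_invertible (Y1 :: 'a mat3)"
    using mats_even mats_M3 by (auto simp: block_invertible_def)
  have "(\<lambda>i j. Kmat i j / 5 :: 'a) \<in> M3" by (rule M3I) (auto simp: mat_defs)
  moreover have "mmul (\<lambda>i j. Kmat i j / 5) (mmul mproj Kmat) = (mproj :: 'a mat3)"
    by (rule M3_eqI[OF mmul_M3 mats_M3(1)])
      (auto simp: mmul_def sum_lessThan_3 mat_defs less_3_iff intro!: M3I)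
  ultimately show "block_invertible (Kmat :: 'a mat3)"
    using mats_even by (auto simp: block_invertible_def)
  have "(\<lambda>i j. - mproj i j / 3 :: 'a) \<in> M3" by (rule M3I) (auto simp: mat_defs)
  moreover have "mmul (\<lambda>i j. - mproj i j / 3) (mmul mproj Smat) = (mproj :: 'a mat3)"
    by (rule M3_eqI[OF mmul_M3 mats_M3(1)])
      (auto simp: mmul_def sum_lessThan_3 mat_defs less_3_iff intro!: M3I)
  ultimately show "block_invertible (Smat :: 'a mat3)"
    using mats_even by (auto simp: block_invertible_def)
qed

definition right_invertible :: "'a::field mat3 \<Rightarrow> bool" where
  "right_invertible M \<longleftrightarrow> M \<in> M3 \<and> (\<exists>E\<in>M3. mmul M E = mone)"

lemma right_invertible_mmul:
  assumes "right_invertible A" "right_invertible (B :: 'a::field mat3)"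
  shows "right_invertible (mmul A B)"
proof -
  obtain EA where EA: "EA \<in> M3" "mmul A EA = mone" using assms(1) by (auto simp: right_invertible_def)
  obtain EB where EB: "EB \<in> M3" "mmul B EB = mone" using assms(2) by (auto simp: right_invertible_def)
  have "mmul (mmul A B) (mmul EB EA) = mone"
    using EA EB by (simp add: mmul_assoc) (simp add: mmul_assoc[symmetric] mmul_mone_right
      right_invertible_def assms(1)[unfolded right_invertible_def])
  then show ?thesis
    using assms EA EB by (auto simp: right_invertible_def mmul_M3)
qed

lemma right_invertible_mprod:
  "\<forall>A\<in>set As. right_invertible A \<Longrightarrow> right_invertible (mprod (As :: 'a::field mat3 list))"
proof (induction As)
  case Nil
  show ?case
    using mmul_mone_right[OF mone_M3] mone_M3 by (auto simp: right_invertible_def)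
qed (simp add: right_invertible_mmul)

lemma right_invertible_Dmat: "right_invertible (Dmat :: 'a::field_char_0 mat3)"
proof -
  let ?E = "(\<lambda>i j. if i = 0 \<and> j = 0 then - 1 / 2
    else if (i = 1 \<and> j = 1) \<or> (i = 2 \<and> j = 2) then 1 else 0) :: 'a mat3"
  have "?E \<in> M3" by (rule M3I) auto
  moreover have "mmul Dmat ?E = mone"
    by (rule M3_eqI[OF mmul_M3[OF mats_M3(9) \<open>?E \<in> M3\<close>] mone_M3])
      (auto simp: mmul_def sum_lessThan_3 mat_defs less_3_iff)
  ultimately show ?thesis
    using mats_M3(9) by (auto simp: right_invertible_def)
qed

text \<open>The chain \<open>Z1 (Z1 S Z1) \<dots> (Z1 S Z1)\<close> formed by the height-one columns of type \<open>z\<^sup>-\<close>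
  and the short columns of type \<open>y\<^sup>-\<close> stays nonzero because \<open>Z1 S Z1\<close> is a nonzero multiple of
  \<open>e11\<close>.\<close>
lemma Z1_sandwich: "S \<in> {Y1, Kmat} \<Longrightarrow> \<exists>t\<noteq>0. mprod [Z1, S, Z1] = scal_e11 (t :: 'a::field_char_0)"
proof -
  have "mprod [Z1, Y1, Z1] = scal_e11 (1 :: 'a)"
    by (rule M3_eqI[OF mprod_M3 mats_M3(10)])
      (simp add: mats_M3, auto simp: mmul_def sum_lessThan_3 mat_defs less_3_iff)
  moreover have "mprod [Z1, Kmat, Z1] = scal_e11 (-2 :: 'a)"
    by (rule M3_eqI[OF mprod_M3 mats_M3(10)])
      (simp add: mats_M3, auto simp: mmul_def sum_lessThan_3 mat_defs less_3_iff)
  ultimately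
  show "S \<in> {Y1, Kmat} \<Longrightarrow> ?thesis"
    by (metis empty_iff insert_iff neg_equal_0_iff_equal one_neq_zero zero_neq_numeral)
qed

lemma mmul_scal_e11: "mmul (scal_e11 a) (scal_e11 b) = scal_e11 (a * b :: 'a::comm_ring_1)"
  by (rule M3_eqI[OF mmul_M3[OF mats_M3(10,10)] mats_M3(10)])
    (auto simp: mmul_def sum_lessThan_3 scal_e11_def less_3_iff)

lemma mprod_Z1_sandwiches:
  assumes "\<forall>k\<in>set ks. Sf k \<in> {Y1, Kmat}"
  shows "mprod (concat (map (\<lambda>k. [Z1, Sf k, Z1]) ks)) = mone \<or>
    (\<exists>t\<noteq>0. mprod (concat (map (\<lambda>k. [Z1, Sf k, Z1]) ks)) = scal_e11 (t :: 'a::field_char_0))"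
  using assms
proof (induction ks)
  case (Cons k ks)
  let ?Q = "mprod (concat (map (\<lambda>k. [Z1, Sf k, Z1]) ks)) :: 'a mat3"
  obtain t where t: "t \<noteq> 0" "mprod [Z1, Sf k, Z1] = scal_e11 (t :: 'a)"
    using Z1_sandwich Cons.prems by force
  have "set [Z1, Sf k, Z1] \<subseteq> M3" "set (concat (map (\<lambda>k. [Z1, Sf k, Z1]) ks)) \<subseteq> (M3 :: 'a mat3 set)"
    using Cons.prems mats_M3 by auto
  from mprod_append[OF this]
  have e: "mprod (concat (map (\<lambda>k. [Z1, Sf k, Z1]) (k # ks))) = mmul (scal_e11 t) ?Q"
    using t by simp
  from Cons.IH Cons.prems consider "?Q = mone" | t' where "t' \<noteq> 0" "?Q = scal_e11 t'"
    by auto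
  then show ?case
  proof cases
    case 1
    then show ?thesis using e t by (auto simp: mmul_mone_right mats_M3)
  next
    case (2 t')
    then have "mprod (concat (map (\<lambda>k. [Z1, Sf k, Z1]) (k # ks))) = scal_e11 (t * t')"
      using e by (simp add: mmul_scal_e11)
    moreover have "t * t' \<noteq> 0" using t(1) 2(1) by simp
    ultimately show ?thesis by blast
  qed
qed simp

lemma Z1_chain_row2:
  assumes "Q = mone \<or> (\<exists>t\<noteq>0. Q = scal_e11 (t :: 'a::field_char_0))" and "T = mone \<or> T = Z1"
  shows "\<exists>j. mmul Z1 (mmul Q T) 2 j \<noteq> 0"
  using assms
  by (elim disjE exE conjE)
    (auto simp: mmul_mone_left mmul_mone_right mone_M3 mats_M3 mmul_def sum_lessThan_3 mat_defs
      intro!: exI[of _ 0] exI[of _ 1])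

lemma lower_rows_nonzero:
  assumes M: "block_invertible M" and Z: "right_invertible Z" and C: "C \<in> M3" "C 2 j0 \<noteq> (0 :: 'a::field)"
  shows "\<exists>i j. (i = 1 \<or> i = 2) \<and> mmul M (mmul C Z) i j \<noteq> 0"
proof (rule ccontr)
  assume "\<not> ?thesis"
  then have "mmul mproj (mmul M (mmul C Z)) = mzero"
    by (auto simp: fun_eq_iff mmul_def sum_lessThan_3 mproj_def mzero_def)
  moreover obtain N where N: "N \<in> M3" "mmul N (mmul mproj M) = mproj"
    using M by (auto simp: block_invertible_def)
  moreover obtain E where E: "E \<in> M3" "mmul Z E = mone"
    using Z by (auto simp: right_invertible_def)
  moreover have "mmul mzero A = mzero" "mmul A mzero = mzero" for A :: "'a mat3"
    by (simp_all add: mmul_def mzero_def fun_eq_iff)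
  ultimately have "mmul (mmul (mmul N (mmul mproj M)) (mmul C Z)) E = mzero"
    by (metis mmul_assoc)
  then have "mmul mproj C = mzero"
    using N E C(1) by (simp add: mmul_assoc mmul_mone_right)
  then show False
    using C(2) mmul_mone_mproj_rows[of mproj 2 C j0] by (simp add: mzero_def)
qed

section \<open>The multipartition of the proposition\<close>

text \<open>The columns of the diagrams of types \<open>y\<^sup>-\<close> and \<open>z\<^sup>-\<close> are read in the order \<open>col_order\<close>:
  first the \<open>y\<^sup>-\<close>-columns outside the chain, then the chain \<open>Z1 (Z1 S Z1) \<dots> (Z1 S Z1) [Z1]\<close> that
  pairs the \<open>npairs\<close> columns \<open>g3, \<dots>, g3 + npairs - 1\<close> of type \<open>y\<^sup>-\<close> (each of height at most two,
  by the hypothesis on \<open>g1 + g2\<close>) with the \<open>r1\<close> columns of height one of type \<open>z\<^sup>-\<close>, and finally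
  the columns of height two of type \<open>z\<^sup>-\<close>. The two rows of the diagram of type \<open>y\<^sup>+\<close> are put in
  front of the whole word and right after its first odd letter.\<close>
locale config =
  fixes la1 :: "nat list" and g1 g2 g3 r1 r2 :: nat
  assumes la1: "is_partition la1" "length la1 \<le> 2"
    and r_pos: "0 < r1 + r2"
    and npairs_le: "(r1 - 1) div 2 \<le> g1 + g2"
begin

definition mpart :: "nat list list" where
  "mpart = [la1, mkpart [g1 + g2 + g3, g2 + g3, g3], [], mkpart [r1 + r2, r2]]"

definition npairs :: nat where "npairs = (r1 - 1) div 2"
definition a1 :: nat where "a1 = (if la1 = [] then 0 else la1 ! 0)"
definition a2 :: nat where "a2 = (if length la1 < 2 then 0 else la1 ! 1)"

lemma a2_le_a1: "a2 \<le> a1"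
  using la1 unfolding a1_def a2_def is_partition_def by (auto simp: sorted_wrt_iff_nth_less)

lemma la1_cases: "la1 = [] \<or> (\<exists>x. la1 = [x]) \<or> (\<exists>x y. la1 = [x, y])"
  using la1(2) by (cases la1 rule: remdups_adj.cases) auto

lemma is_cell_0_iff: "is_cell mpart 0 r c \<longleftrightarrow> (r = 0 \<and> c < a1) \<or> (r = 1 \<and> c < a2)"
  using la1_cases by (auto simp: is_cell_def mpart_def a1_def a2_def nth_Cons split: nat.splits)

lemma is_cell_1_iff:
  "is_cell mpart (Suc 0) r c \<longleftrightarrow> (r = 0 \<and> c < g1 + g2 + g3) \<or> (r = 1 \<and> c < g2 + g3) \<or> (r = 2 \<and> c < g3)"
proof -
  have "is_cell mpart (Suc 0) r c \<longleftrightarrow> r < length [g1 + g2 + g3, g2 + g3, g3] \<and> c < [g1 + g2 + g3, g2 + g3, g3] ! r"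
    unfolding is_cell_def mpart_def by (simp add: cell_mkpart_iff)
  then show ?thesis
    by (auto simp: less_Suc_eq nth_Cons split: nat.splits)
qed

lemma is_cell_3_iff: "is_cell mpart 3 r c \<longleftrightarrow> (r = 0 \<and> c < r1 + r2) \<or> (r = 1 \<and> c < r2)"
proof -
  have "is_cell mpart 3 r c \<longleftrightarrow> r < length [r1 + r2, r2] \<and> c < [r1 + r2, r2] ! r"
    unfolding is_cell_def mpart_def by (simp add: cell_mkpart_iff numeral_3_eq_3)
  then show ?thesis
    by (auto simp: less_Suc_eq numeral_2_eq_2)
qed

lemma is_cell_block: "is_cell mpart k r c \<Longrightarrow> k = 0 \<or> k = 1 \<or> k = 3"
  by (auto simp: is_cell_def mpart_def nth_Cons split: nat.splits)

lemma cell_0: "cell mpart 0 0 c = c" "cell mpart 0 (Suc 0) c = a1 + c"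
  using la1_cases by (auto simp: cell_def offs_def mpart_def a1_def)

lemma cell_ge: "is_cell mpart k r c \<Longrightarrow> k \<noteq> 0 \<Longrightarrow> a1 + a2 \<le> cell mpart k r c"
proof -
  assume "is_cell mpart k r c" "k \<noteq> 0"
  then have "offs mpart 1 \<le> offs mpart k"
    unfolding offs_def by (intro sum_list_take_mono) simp
  moreover have "offs mpart 1 = a1 + a2"
    using la1_cases by (auto simp: offs_def mpart_def sizes_def a1_def a2_def)
  ultimately show ?thesis by (simp add: cell_def)
qed

definition col_height :: "nat \<times> nat \<Rightarrow> nat" where
  "col_height = (\<lambda>(k, c). if k = 1 then (if c < g3 then 3 else if c < g2 + g3 then 2 else 1)
     else (if c < r2 then 2 else 1))"

definition col_cells :: "nat \<times> nat \<Rightarrow> nat list" where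
  "col_cells = (\<lambda>(k, c). map (\<lambda>r. cell mpart k r c) [0..<col_height (k, c)])"

definition is_col :: "nat \<times> nat \<Rightarrow> bool" where
  "is_col = (\<lambda>(k, c). (k = 1 \<and> c < g1 + g2 + g3) \<or> (k = 3 \<and> c < r1 + r2))"

lemma Collect_is_col: "{kc. is_col kc} = Pair 1 ` {..<g1 + g2 + g3} \<union> Pair 3 ` {..<r1 + r2}"
  by (auto simp: is_col_def)

lemma is_cell_col: "is_col (k, c) \<Longrightarrow> r < col_height (k, c) \<Longrightarrow> is_cell mpart k r c"
  by (auto simp: is_col_def col_height_def is_cell_1_iff is_cell_3_iff split: if_splits)

lemma is_cell_is_col:
  "is_cell mpart k r c \<Longrightarrow> k \<noteq> 0 \<Longrightarrow> is_col (k, c) \<and> r < col_height (k, c)"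
  using is_cell_block[of k r c] by (auto simp: is_col_def col_height_def is_cell_1_iff is_cell_3_iff)

lemma colkey_col_cells: "is_col kc \<Longrightarrow> x \<in> set (col_cells kc) \<Longrightarrow> colkey mpart x = kc"
  by (auto simp: col_cells_def colkey_cell is_cell_col split: prod.splits)

lemma distinct_col_cells: "is_col kc \<Longrightarrow> distinct (col_cells kc)"
  by (auto simp: col_cells_def distinct_map inj_on_def split: prod.splits)
    (metis is_cell_col cell_inj prod.inject)

lemma col_cells_Cons: "col_cells (k, c) = cell mpart k 0 c # tl (col_cells (k, c))"
  by (simp add: col_cells_def col_height_def upt_conv_Cons)

definition col_val :: "nat \<times> nat \<Rightarrow> 'a::comm_ring_1 mat3" where
  "col_val = (\<lambda>(k, c). if k = 1 then (if c < g3 then Smat else if c < g2 + g3 then Kmat else Y1)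
     else (if c < r2 then Dmat else Z1))"

lemma col_val_M3: "col_val kc \<in> M3"
  by (simp add: col_val_def mats_M3 split: prod.splits)

lemma alt_prod_col_cells:
  assumes "is_col (k, c)"
  shows "alt_prod (colkey mpart) (row_subst \<circ> rowkey mpart) (col_cells (k, c)) =
    (col_val (k, c) :: 'a::comm_ring_1 mat3)"
proof -
  note col = alt_prod_column[of "col_height (k, c)" mpart k c row_subst,
      OF is_cell_col[OF assms] row_subst_M3]
  show ?thesis
    using assms col unfolding col_cells_def
    by (auto simp: is_col_def col_height_def col_val_def row_subst_def mcomm_Y1_Y2 mstd3_Y1_Y2_Y3
        mcomm_Z1_Z2)
qed


definition unpaired_cols :: "(nat \<times> nat) list" where
  "unpaired_cols = map (Pair 1) ([0..<g3] @ [g3 + npairs..<g1 + g2 + g3])"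
definition sandwich :: "nat \<Rightarrow> (nat \<times> nat) list" where
  "sandwich i = [(3, r2 + 1 + 2 * i), (1, g3 + i), (3, r2 + 2 + 2 * i)]"
definition chain_cols :: "(nat \<times> nat) list" where
  "chain_cols = (if r1 = 0 then [] else
     (3, r2) # concat (map sandwich [0..<npairs]) @ (if even r1 then [(3, r2 + r1 - 1)] else []))"
definition tall_z_cols :: "(nat \<times> nat) list" where
  "tall_z_cols = map (Pair 3) [0..<r2]"
definition col_order :: "(nat \<times> nat) list" where
  "col_order = unpaired_cols @ chain_cols @ tall_z_cols"

lemma set_sandwiches:
  "set (concat (map sandwich [0..<n])) = Pair 1 ` {g3..<g3 + n} \<union> Pair 3 ` {r2 + 1..<r2 + 1 + 2 * n}"
proof (induction n)
  case (Suc n)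
  have "{g3..<g3 + Suc n} = insert (g3 + n) {g3..<g3 + n}"
    "{r2 + 1..<r2 + 1 + 2 * Suc n} = {r2 + 1..<r2 + 1 + 2 * n} \<union> {r2 + 1 + 2 * n, r2 + 2 + 2 * n}"
    by auto
  then show ?case using Suc by (auto simp: sandwich_def)
qed simp

lemma length_sandwiches: "length (concat (map sandwich xs)) = 3 * length xs"
  by (induction xs) (auto simp: sandwich_def)

lemma set_chain_cols: "set chain_cols = Pair 1 ` {g3..<g3 + npairs} \<union> Pair 3 ` {r2..<r2 + r1}"
proof (cases "r1 = 0")
  case False
  have "{r2..<r2 + r1} = insert r2 {r2 + 1..<r2 + 1 + 2 * npairs} \<union> (if even r1 then {r2 + r1 - 1} else {})"
    using False by (auto simp: npairs_def)
  then show ?thesis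
    using False by (auto simp: chain_cols_def set_sandwiches simp del: set_concat)
next
  case True
  then show ?thesis unfolding chain_cols_def npairs_def by simp
qed

lemma set_col_order: "set col_order = {kc. is_col kc}"
proof -
  have "{0..<g3} \<union> {g3 + npairs..<g1 + g2 + g3} \<union> {g3..<g3 + npairs} = {..<g1 + g2 + g3}"
    using npairs_le by (auto simp: npairs_def)
  then have "set unpaired_cols \<union> Pair 1 ` {g3..<g3 + npairs} = Pair 1 ` {..<g1 + g2 + g3}"
    by (simp add: unpaired_cols_def image_Un[symmetric])
  moreover have "{r2..<r2 + r1} \<union> {0..<r2} = {..<r1 + r2}"
    by auto
  then have "Pair 3 ` {r2..<r2 + r1} \<union> set tall_z_cols = Pair 3 ` {..<r1 + r2}"
    by (simp add: tall_z_cols_def image_Un[symmetric])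
  moreover have "set col_order = (set unpaired_cols \<union> Pair 1 ` {g3..<g3 + npairs}) \<union>
      (Pair 3 ` {r2..<r2 + r1} \<union> set tall_z_cols)"
    by (simp add: col_order_def set_chain_cols Un_ac)
  ultimately show ?thesis
    by (simp add: Collect_is_col)
qed

lemma distinct_col_order: "distinct col_order"
proof (rule card_distinct)
  have "card {kc. is_col kc} = (g1 + g2 + g3) + (r1 + r2)"
  proof -
    have "card {kc. is_col kc} =
        card (Pair (1::nat) ` {..<g1 + g2 + g3}) + card (Pair (3::nat) ` {..<r1 + r2})"
      unfolding Collect_is_col by (rule card_Un_disjoint) auto
    then show ?thesis
      by (simp add: card_image inj_on_def)
  qed
  moreover have "length col_order = (g1 + g2 + g3) + (r1 + r2)"
    using npairs_le
    by (simp add: col_order_def unpaired_cols_def chain_cols_def tall_z_cols_def length_sandwiches npairs_def)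
      presburger
  ultimately show "card (set col_order) = length col_order"
    by (simp add: set_col_order)
qed

lemma distinct_concat_col_cells: "distinct (concat (map col_cells col_order))"
proof -
  have "distinct (concat (map col_cells L))" if "distinct L" "set L \<subseteq> {kc. is_col kc}" for L
    using that
  proof (induction L)
    case (Cons kc L)
    have "x \<notin> set (col_cells kc')" if "x \<in> set (col_cells kc)" "kc' \<in> set L" for x kc'
    proof
      assume x: "x \<in> set (col_cells kc')"
      have "is_col kc'" "is_col kc" using Cons.prems(2) that(2) by auto
      then have "colkey mpart x = kc'" "colkey mpart x = kc"
        using colkey_col_cells x that(1) by blast+
      then show False using Cons.prems(1) that(2) by auto
    qed
    then show ?case using Cons distinct_col_cells by auto
  qed simp
  then show ?thesis using distinct_col_order set_col_order by simp
qed

lemma set_concat_col_cells: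
  "set (concat (map col_cells col_order)) = {x. \<exists>k r c. is_cell mpart k r c \<and> k \<noteq> 0 \<and> x = cell mpart k r c}"
  using is_cell_col is_cell_is_col is_cell_block
  by (fastforce simp: set_col_order col_cells_def is_col_def)

lemma alt_prod_concat_col_cells:
  "alt_prod (colkey mpart) (row_subst \<circ> rowkey mpart) (concat (map col_cells col_order)) =
    (mprod (map col_val col_order) :: 'a::comm_ring_1 mat3)"
proof -
  have is_col: "\<And>kc. kc \<in> set col_order \<Longrightarrow> is_col kc" using set_col_order by auto
  have hd_key: "colkey mpart (hd (col_cells kc)) = kc" if "is_col kc" for kc
    using colkey_col_cells[OF that] col_cells_Cons[of "fst kc" "snd kc"]
    by (metis list.set_intros(1) list.sel(1) prod.collapse)
  have "alt_prod (colkey mpart) (row_subst \<circ> rowkey mpart) (concat (map col_cells col_order)) =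
      mprod (map (alt_prod (colkey mpart) (row_subst \<circ> rowkey mpart)) (map col_cells col_order))"
  proof (rule alt_prod_concat[where wkey = "\<lambda>w. colkey mpart (hd w)"])
    show "distinct (concat (map col_cells col_order))" by (rule distinct_concat_col_cells)
    show "\<And>w x. w \<in> set (map col_cells col_order) \<Longrightarrow> x \<in> set w \<Longrightarrow> colkey mpart x = colkey mpart (hd w)"
      using is_col colkey_col_cells hd_key by auto
    have "map (\<lambda>w. colkey mpart (hd w)) (map col_cells col_order) = col_order"
      using is_col hd_key by (simp add: map_idI)
    then show "distinct (map (\<lambda>w. colkey mpart (hd w)) (map col_cells col_order))"
      using distinct_col_order by simp
  qed (simp add: row_subst_M3)
  also have "\<dots> = mprod (map col_val col_order)"
    using is_col by (auto simp: alt_prod_col_cells intro!: arg_cong[of _ _ mprod])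
  finally show ?thesis .
qed

definition c0 :: nat where "c0 = (if r1 = 0 then 0 else r2)"
definition X1 :: "nat list" where "X1 = [0..<a1]"
definition X2 :: "nat list" where "X2 = [a1..<a1 + a2]"
definition wA :: "nat list" where "wA = concat (map col_cells unpaired_cols) @ [cell mpart 3 0 c0]"
definition wB :: "nat list" where "wB = tl (concat (map col_cells (chain_cols @ tall_z_cols)))"
definition w0 :: "nat list" where "w0 = X1 @ wA @ X2 @ wB"

lemma concat_col_cells_eq: "concat (map col_cells col_order) = wA @ wB"
proof -
  obtain cs where cs: "chain_cols @ tall_z_cols = (3, c0) # cs"
  proof (cases "r1 = 0")
    case True
    then obtain r where "r2 = Suc r" using r_pos by (cases r2) auto
    with True that show ?thesis
      unfolding chain_cols_def tall_z_cols_def c0_def by (simp add: upt_conv_Cons del: upt_Suc)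
  qed (use that in \<open>simp add: chain_cols_def c0_def\<close>)
  moreover obtain ys where "col_cells (3, c0) = cell mpart 3 0 c0 # ys"
    using col_cells_Cons by blast
  ultimately show ?thesis
    by (simp add: col_order_def wA_def wB_def)
qed

lemma set_X1_X2: "set X1 \<union> set X2 = {0..<a1 + a2}"
  using a2_le_a1 by (auto simp: X1_def X2_def)

lemma set_wA_wB_ge: "x \<in> set (wA @ wB) \<Longrightarrow> a1 + a2 \<le> x"
  unfolding concat_col_cells_eq[symmetric] set_concat_col_cells using cell_ge by blast

lemma set_w0: "set w0 = {0..<total mpart}"
proof
  show "set w0 \<subseteq> {0..<total mpart}"
  proof
    fix x assume "x \<in> set w0"
    then consider "x \<in> set X1 \<union> set X2" | "x \<in> set (concat (map col_cells col_order))"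
      by (auto simp: w0_def concat_col_cells_eq)
    then show "x \<in> {0..<total mpart}"
    proof cases
      case 1
      then show ?thesis using cell_less_total[of mpart 0 0 x] cell_less_total[of mpart 0 1 "x - a1"]
        by (auto simp: X1_def X2_def is_cell_0_iff cell_0)
    next
      case 2
      then show ?thesis unfolding set_concat_col_cells using cell_less_total by auto
    qed
  qed
  show "{0..<total mpart} \<subseteq> set w0"
  proof
    fix x assume "x \<in> {0..<total mpart}"
    then obtain k r c where kc: "is_cell mpart k r c" "x = cell mpart k r c"
      using cell_cases[of x mpart] by auto
    show "x \<in> set w0"
    proof (cases "k = 0")
      case True
      then show ?thesis using kc by (auto simp: is_cell_0_iff cell_0 w0_def X1_def X2_def)
    next
      case False
      then show ?thesis using kc concat_col_cells_eq set_concat_col_cells by (auto simp: w0_def)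
    qed
  qed
qed

lemma w0_mlwords: "w0 \<in> mlwords (total mpart)"
proof -
  have "distinct (wA @ wB)" using distinct_concat_col_cells by (simp add: concat_col_cells_eq)
  moreover have "set (wA @ wB) \<inter> {0..<a1 + a2} = {}" using set_wA_wB_ge by fastforce
  ultimately show ?thesis
    using set_w0 by (auto simp: mlwords_def w0_def X1_def X2_def)
qed

lemma colkey_X: "x < a1 \<Longrightarrow> colkey mpart x = (0, x)" "a1 \<le> x \<Longrightarrow> x < a1 + a2 \<Longrightarrow> colkey mpart x = (0, x - a1)"
  using colkey_cell[of mpart 0 0 x] colkey_cell[of mpart 0 1 "x - a1"]
  by (simp_all add: is_cell_0_iff cell_0)

lemma row_subst_X:
  "x < a1 \<Longrightarrow> row_subst (rowkey mpart x) = mone"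
  "a1 \<le> x \<Longrightarrow> x < a1 + a2 \<Longrightarrow> row_subst (rowkey mpart x) = mproj"
  using rowkey_cell[of mpart 0 0 x] rowkey_cell[of mpart 0 1 "x - a1"]
  by (simp_all add: is_cell_0_iff cell_0 row_subst_def)

lemma colkey_X_cases:
  "z < a1 + a2 \<Longrightarrow> colkey mpart z = (0, c) \<Longrightarrow> z = c \<or> (z = a1 + c \<and> c < a2)"
  by (cases "z < a1") (auto simp: colkey_X)

definition swap_rows :: "nat \<Rightarrow> nat" where
  "swap_rows x = (if x < a2 then a1 + x else if a1 \<le> x \<and> x < a1 + a2 then x - a1 else x)"

lemma swap_rows_key_perms: "swap_rows \<in> key_perms (colkey mpart) (set X1 \<union> set X2)"
proof -
  have "swap_rows permutes {0..<a1 + a2}"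
  proof (rule bij_imp_permutes)
    show "bij_betw swap_rows {0..<a1 + a2} {0..<a1 + a2}"
      by (rule bij_betw_byWitness[where f' = swap_rows]) (use a2_le_a1 in \<open>auto simp: swap_rows_def\<close>)
  qed (use a2_le_a1 in \<open>auto simp: swap_rows_def\<close>)
  moreover have "colkey mpart (swap_rows x) = colkey mpart x" if "x < a1 + a2" for x
    using that a2_le_a1 by (auto simp: swap_rows_def colkey_X)
  ultimately show ?thesis
    unfolding key_perms_def set_X1_X2 by auto
qed

lemma row_subst_swap_rows: "x \<in> set X2 \<Longrightarrow> row_subst (rowkey mpart (swap_rows x)) = mone"
proof -
  assume "x \<in> set X2"
  then have "a1 \<le> x" "x < a1 + a2" "x - a1 < a1" using a2_le_a1 by (auto simp: X2_def)
  then show ?thesis using row_subst_X(1) a2_le_a1 by (simp add: swap_rows_def)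
qed

lemma key_perms_X_second_row:
  assumes c: "c \<in> key_perms (colkey mpart) (set X1 \<union> set X2)" and low: "\<And>x. x \<in> set X2 \<Longrightarrow> c x < a1"
    and j: "j < a2"
  shows "c (a1 + j) = j"
proof -
  have "c (a1 + j) < a1" using low j by (simp add: X2_def)
  moreover have "colkey mpart (c (a1 + j)) = (0, j)"
    using c j colkey_X(2)[of "a1 + j"] by (simp add: key_perms_def set_X1_X2)
  ultimately show ?thesis using colkey_X(1) by simp
qed

lemma key_perms_X_first_row:
  assumes c: "c \<in> key_perms (colkey mpart) (set X1 \<union> set X2)" and y: "y < a1"
  shows "c y = y \<or> (c y = a1 + y \<and> y < a2)"
proof -
  have "c y < a1 + a2"
    using permutes_in_image[OF key_perms_permutes[OF c], of y] y set_X1_X2 by auto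
  moreover have "colkey mpart (c y) = (0, y)"
    using c y colkey_X(1)[of y] by (simp add: key_perms_def set_X1_X2)
  ultimately show ?thesis using colkey_X_cases by simp
qed

lemma key_perms_X_eq_swap_rows:
  assumes c: "c \<in> key_perms (colkey mpart) (set X1 \<union> set X2)" and low: "\<And>x. x \<in> set X2 \<Longrightarrow> c x < a1"
  shows "c = swap_rows"
proof
  have second_row: "c (a1 + j) = j" if "j < a2" for j
    using key_perms_X_second_row[of c j] c low that by blast
  note first_row = key_perms_X_first_row[OF c]
  fix y
  consider "y < a2" | "a2 \<le> y" "y < a1" | "a1 \<le> y" "y < a1 + a2" | "a1 + a2 \<le> y"
    using a2_le_a1 by linarith
  then show "c y = swap_rows y"
  proof cases
    case 1
    then have y: "y < a1" using a2_le_a1 by simp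
    have "c y \<noteq> y"
    proof
      assume "c y = y"
      then have "c y = c (a1 + y)" using second_row[OF 1] by simp
      then have "y = a1 + y" using injD[OF permutes_inj[OF key_perms_permutes[OF c]]] by blast
      then show False using y by simp
    qed
    then have "c y = a1 + y" using first_row[OF y] by blast
    then show ?thesis using 1 by (simp add: swap_rows_def)
  next
    case 2
    then show ?thesis using first_row[of y] by (simp add: swap_rows_def)
  next
    case 3
    then show ?thesis using second_row[of "y - a1"] a2_le_a1 by (simp add: swap_rows_def)
  next
    case 4
    then show ?thesis
      using permutes_not_in[OF key_perms_permutes[OF c], of y] set_X1_X2 by (simp add: swap_rows_def)
  qed
qed

lemma row_subst_X_cases:
  assumes "c \<in> key_perms (colkey mpart) (set X1 \<union> set X2)" "x \<in> set X1 \<union> set X2"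
  shows "row_subst (rowkey mpart (c x)) = (if c x < a1 then mone else mproj)"
proof -
  have "c x \<in> set X1 \<union> set X2"
    using assms permutes_in_image[OF key_perms_permutes[OF assms(1)]] by blast
  then show ?thesis using set_X1_X2 by (cases "c x < a1") (simp_all add: row_subst_X not_less)
qed

lemma colkey_X_neq_wA_wB:
  assumes "a \<in> set X1 \<union> set X2" "b \<in> set wA \<union> set wB"
  shows "colkey mpart a \<noteq> colkey mpart b"
proof -
  have "fst (colkey mpart a) = 0"
    using assms(1) set_X1_X2 by (cases "a < a1") (auto simp: colkey_X)
  moreover obtain k r c where "is_cell mpart k r c" "k \<noteq> 0" "b = cell mpart k r c"
    using assms(2)
    unfolding set_append[symmetric] concat_col_cells_eq[symmetric] set_concat_col_cells by blast
  ultimately show ?thesis by (auto simp: colkey_cell)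
qed

lemma odd_wA:
  assumes c: "c \<in> key_perms (colkey mpart) (set wA \<union> set wB)"
  shows "is_odd (mprod (map ((row_subst \<circ> rowkey mpart) \<circ> c) wA) :: 'a::comm_ring_1 mat3)"
proof -
  have block: "rowkey mpart (c x) = (fst (colkey mpart x), snd (rowkey mpart (c x)))"
    if "x \<in> set wA" for x
    using rowkey_key_perms[OF c] that by simp
  have "\<forall>A\<in>set (map ((row_subst \<circ> rowkey mpart) \<circ> c) (concat (map col_cells unpaired_cols))). is_even (A :: 'a mat3)"
  proof
    fix A assume "A \<in> set (map ((row_subst \<circ> rowkey mpart) \<circ> c) (concat (map col_cells unpaired_cols)))"
    then obtain kc x where x: "kc \<in> set unpaired_cols" "x \<in> set (col_cells kc)"
      "A = row_subst (rowkey mpart (c x))"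
      by auto
    have "is_col kc" "fst kc = 1" using x(1) set_col_order by (auto simp: col_order_def unpaired_cols_def)
    then have "fst (colkey mpart x) = 1" using colkey_col_cells x(2) by simp
    moreover have "x \<in> set wA" using x(1,2) by (auto simp: wA_def)
    ultimately show "is_even A" using x(3) block row_subst_even by metis
  qed
  moreover have "is_odd (row_subst (rowkey mpart (c (cell mpart 3 0 c0))) :: 'a mat3)"
  proof -
    have "is_cell mpart 3 0 c0" using r_pos by (auto simp: is_cell_3_iff c0_def)
    then have "fst (colkey mpart (cell mpart 3 0 c0)) = 3" by (simp add: colkey_cell)
    moreover have "cell mpart 3 0 c0 \<in> set wA" by (simp add: wA_def)
    ultimately show ?thesis using block row_subst_odd by metis
  qed
  ultimately have "is_odd (mprod (map ((row_subst \<circ> rowkey mpart) \<circ> c) (concat (map col_cells unpaired_cols))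
      @ [row_subst (rowkey mpart (c (cell mpart 3 0 c0)))]) :: 'a mat3)"
    by (rule mprod_snoc_odd)
  then show ?thesis
    by (simp add: wA_def)
qed

lemma chain_row_2: "\<exists>j. mprod (map col_val chain_cols) 2 j \<noteq> (0 :: 'a::field_char_0)"
proof (cases "r1 = 0")
  case True
  then show ?thesis
    unfolding chain_cols_def by (intro exI[of _ 2]) (simp add: mone_def)
next
  case False
  define S where "S i = (col_val (1, g3 + i) :: 'a mat3)" for i
  define T where "T = (if even r1 then [Z1] else ([] :: 'a mat3 list))"
  have sandwiches: "map col_val (concat (map sandwich is)) = concat (map (\<lambda>i. [Z1, S i, Z1]) is)" for "is"
    by (induction "is") (auto simp: sandwich_def col_val_def S_def)
  have S: "\<forall>i\<in>set [0..<npairs]. S i \<in> {Y1, Kmat}"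
    by (auto simp: S_def col_val_def)
  have "map col_val chain_cols = Z1 # concat (map (\<lambda>i. [Z1, S i, Z1]) [0..<npairs]) @ T"
    using False by (simp add: chain_cols_def T_def sandwiches, auto simp: col_val_def)
  moreover have "set (concat (map (\<lambda>i. [Z1, S i, Z1]) [0..<npairs])) \<subseteq> M3" "set T \<subseteq> M3"
    using S mats_M3 by (auto simp: T_def)
  ultimately have "mprod (map col_val chain_cols) =
      mmul Z1 (mmul (mprod (concat (map (\<lambda>i. [Z1, S i, Z1]) [0..<npairs]))) (mprod T))"
    by (simp add: mprod_append)
  moreover have "mprod T = mone \<or> mprod T = Z1"
    by (auto simp: T_def mmul_mone_right mats_M3)
  ultimately show ?thesis
    using Z1_chain_row2[OF mprod_Z1_sandwiches[OF S]] by simp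
qed

lemma lower_rows_col_order:
  "\<exists>i j. (i = 1 \<or> i = 2) \<and> mprod (map col_val col_order) i j \<noteq> (0 :: 'a::field_char_0)"
proof -
  have M: "\<And>L. set (map col_val L) \<subseteq> (M3 :: 'a mat3 set)" using col_val_M3 by auto
  have "block_invertible (mprod (map col_val unpaired_cols) :: 'a mat3)"
    by (rule block_invertible_mprod) (auto simp: unpaired_cols_def col_val_def block_invertible_consts)
  moreover have "right_invertible (mprod (map col_val tall_z_cols) :: 'a mat3)"
    by (rule right_invertible_mprod) (auto simp: tall_z_cols_def col_val_def right_invertible_Dmat)
  moreover obtain j0 where "mprod (map col_val chain_cols) 2 j0 \<noteq> (0 :: 'a)"
    using chain_row_2 by blast
  ultimately show ?thesis
    using lower_rows_nonzero[OF _ _ mprod_M3[OF M]] M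
    by (simp add: col_order_def mprod_append)
qed

lemma alt_prod_w0:
  assumes i: "i = 1 \<or> i = 2"
  shows "alt_prod (colkey mpart) (row_subst \<circ> rowkey mpart) w0 i j =
    of_int (sign swap_rows) * (mprod (map col_val col_order) i j :: 'a::comm_ring_1)"
proof -
  let ?s = "row_subst \<circ> rowkey mpart :: nat \<Rightarrow> 'a mat3"
  have "alt_prod (colkey mpart) ?s w0 i j =
      of_int (sign swap_rows) * alt_prod (colkey mpart) ?s (wA @ wB) i j"
    unfolding w0_def
  proof (rule alt_prod_two_rows[OF _ _ colkey_X_neq_wA_wB _ swap_rows_key_perms _ _ odd_wA i])
    show "distinct (X1 @ wA @ X2 @ wB)" using w0_mlwords by (simp add: w0_def mlwords_def)
    show "?s x \<in> {mone, mproj}" if "x \<in> set X1 \<union> set X2" for x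
      using that set_X1_X2 by (cases "x < a1") (auto simp: row_subst_X not_less)
    show "?s (swap_rows x) = mone" if "x \<in> set X2" for x
      using row_subst_swap_rows[OF that] by simp
    show "\<exists>x\<in>set X2. ?s (c x) = mproj"
      if c: "c \<in> key_perms (colkey mpart) (set X1 \<union> set X2)" "c \<noteq> swap_rows" for c
    proof (rule ccontr)
      assume "\<not> (\<exists>x\<in>set X2. ?s (c x) = mproj)"
      then have "c x < a1" if "x \<in> set X2" for x
        using row_subst_X_cases[OF c(1), of x] that by (auto split: if_splits)
      then have "c = swap_rows" by (rule key_perms_X_eq_swap_rows[OF c(1)])
      with c(2) show False ..
    qed
  qed (simp_all add: row_subst_M3)
  also have "\<dots> = of_int (sign swap_rows) * mprod (map col_val col_order) i j"
    using alt_prod_concat_col_cells[where 'a = 'a] concat_col_cells_eq by simp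
  finally show ?thesis .
qed

theorem mult_mpart_neq_0: "mult (F :: 'a::field_char_0 itself) mpart \<noteq> 0"
proof -
  obtain i j where "i = 1 \<or> i = 2" "mprod (map col_val col_order) i j \<noteq> (0 :: 'a)"
    using lower_rows_col_order by blast
  then have "alt_prod (colkey mpart) (row_subst \<circ> rowkey mpart) w0 i j \<noteq> (0 :: 'a)"
    by (simp add: alt_prod_w0 sign_def)
  then show ?thesis
    by (rule mult_neq_0_if_alt_prod[OF w0_mlwords row_subst_part])
qed

end

lemma div2_le_of_ceiling_half:
  assumes "r \<le> 2 \<or> (3 \<le> r \<and> real g \<ge> real_of_int \<lceil>real r / 2\<rceil> - 1)"
  shows "(r - 1) div 2 \<le> g"
  using assms
proof
  assume r: "3 \<le> r \<and> real_of_int \<lceil>real r / 2\<rceil> - 1 \<le> real g"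
  have "real r / 2 \<le> real_of_int \<lceil>real r / 2\<rceil>"
    by (rule le_of_int_ceiling)
  then have "r \<le> 2 * g + 2" using r by linarith
  then show ?thesis by linarith
qed auto

theorem proposition5p11:
  fixes F :: "'a::field_char_0 itself"
    and la1 :: "nat list" and g1 g2 g3 r1 r2 :: nat
  assumes "is_partition la1" and "length la1 \<le> 2"
    and "mkpart [g1 + g2 + g3, g2 + g3, g3] \<noteq> []"
    and "mkpart [r1 + r2, r2] \<noteq> []"
    and "r1 \<le> 2 \<or> (3 \<le> r1 \<and> real (g1 + g2) \<ge> real_of_int \<lceil>real r1 / 2\<rceil> - 1)"
  shows "mult F [la1, mkpart [g1 + g2 + g3, g2 + g3, g3], [], mkpart [r1 + r2, r2]] \<noteq> 0"
proof -
  have "0 < r1 + r2"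
    using assms(4) by (cases "0 < r1 + r2") (auto simp: mkpart_def)
  moreover have "(r1 - 1) div 2 \<le> g1 + g2"
    using assms(5) by (rule div2_le_of_ceiling_half)
  ultimately interpret config la1 g1 g2 g3 r1 r2
    using assms(1,2) by unfold_locales
  show ?thesis
    using mult_mpart_neq_0[of F] by (simp add: mpart_def)
qed

end
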